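(* In DP-EFB, for every trial $t$, define for $a\in\mathcal A$ $$\theta_t(a):=\frac{[a\in V(\sigma_t)]\,\eta\, d_t(a)}{\gamma\beta(a)+q_t(a)}$$ (taken to be $0$ when $a\notin V(\sigma_t)$). Then $$\psi_t(r)=\sum_{\sigma\in\mathcal S}\Big(\prod_{a\in\mathcal A(\sigma)}\pi_t(a)\Big)\exp\Big(-\sum_{a\in\mathcal A(\sigma)}\theta_t(a)\Big),$$ where $\prod_{a\in\mathcal A(\sigma)}\pi_t(a)=\Pr[\sigma_t=\sigma\mid\pi_t]$.
   Context: Game tree: $V$ is the node set of a finite rooted tree with root $r$ and leaf set $L$; $C(v)$ denotes the set of children of $v$ and $p(v)$ the parent of $v\neq r$. The internal nodes $V\setminus L$ are partitioned into a set $N$ of infosets and a set $\mathcal A$ of actions such that $r\in N$, $C(v)\subseteq\mathcal A$ and $|C(v)|>1$ for every $v\in N$, and $C(a)\subseteq N\cup L$ for every $a\in\mathcal A$. A loss function $\lambda:L\to[0,1]$ is fixed. A (pure) strategy is a map $\sigma:N\to V$ with $\sigma(v)\in C(v)$ for all $v\in N$; an environment is a map $\mu:\mathcal A\to V$ with $\mu(a)\in C(a)$ for all $a\in\mathcal A$. For a strategy $\sigma$, $V(\sigma)$ is the smallest subset of $V$ containing $r$, containing $\sigma(v)$ for every $v\in N\cap V(\sigma)$, and containing $C(a)$ for every $a\in\mathcal A\cap V(\sigma)$. The reduced strategy of $\sigma$ is the restriction of $\sigma$ to $N\cap V(\sigma)$ (with $V$ of it defined as $V(\sigma)$); $\mathcal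 S$ is the set of all reduced strategies. For $\sigma\in\mathcal S$ write $N(\sigma)=N\cap V(\sigma)$, $\mathcal A(\sigma)=\mathcal A\cap V(\sigma)$. Playing a pair $(\sigma,\mu)$, $\sigma\in\mathcal S$, $\mu$ an environment, traverses the root-to-leaf path starting at $r$, moving from $v\in N$ to $\sigma(v)$ and from $a\in\mathcal A$ to $\mu(a)$, stopping at a leaf $u$; the loss is $\Lambda(\sigma,\mu):=\lambda(u)$, and the last action on this path is called the last action encountered. Functions $n,m:N\cup\mathcal A\to\mathbb N$ are defined recursively from the bottom of the tree: for $a\in\mathcal A$, $n(a)=\prod_{v\in C(a)\cap N}n(v)$ and $m(a)=1+\sum_{v\in C(a)\cap N}m(v)$ (empty product $=1$, empty sum $=0$); for $v\in N$, $n(v)=\sum_{a\in C(v)}n(a)$ and $m(v)=\sum_{a\in C(v)}m(a)$. The function $\beta:N\cup\mathcal A\to\mathbb R$ is defined from the top: $\beta(r)=1$, $\beta(a)=m(a)\beta(p(a))$ for $a\in\mathcal A$, $\beta(v)=\beta(p(v))/m(v)$ for $v\in N\setminus\{r\}$. Algorithm DP-EFB (parameters $T$, $\epsilon\in(0,1)$): set $\eta:=\left(\left(\frac{6\ln T}{\epsilon}+\frac{9(e-2)}{\epsilon^2}\right)\frac{m(r)T}{\ln n(r)}\right)^{-1/2}$ and $\gamma:=6\ln(T)\eta/\epsilon$. A policy is a map $\pi:\mathcal A\to[0,1]$ with $\sum_{a\in C(v)}\pi(a)=1$ for all $v\in N$. Initially $\pi_1(a):=n(a)/n(p(a))$ for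 all $a\in\mathcal A$. For $a\in\mathcal A$, let $q_t(a)$ be the product of $\pi_t(a')$ over all actions $a'$ on the path from $r$ to $a$ (including $a$). Environments $\mu_1,\dots,\mu_T$ are fixed in advance. On each trial $t=1,\dots,T$: (i) the server samples $\sigma_t\in\mathcal S$ recursively: starting at $r$, at each visited infoset $v$ it draws $\sigma_t(v)\in C(v)$ with $\Pr[\sigma_t(v)=a]=\pi_t(a)$ independently, and then visits every $v'\in C(\sigma_t(v))\cap N$. (ii) $(\sigma_t,\mu_t)$ is played, giving loss $\ell_t:=\Lambda(\sigma_t,\mu_t)$; let $z_t$ be the last action encountered. (iii) For each $a\in\mathcal A(\sigma_t)$, independently draw $\phi_t(a)$ from the Laplace density $Q(x)=\frac{\epsilon}{4}\exp(-\frac{\epsilon}{2}|x|)$ and set $d_t(a):=[a=z_t]\,\ell_t+\phi_t(a)$ (where $[P]$ is $1$ if $P$ holds and $0$ otherwise); $d_t:\mathcal A(\sigma_t)\to\mathbb R$ is sent to the server. (iv) The server runs $\mathrm{Update}_t(r,1)$, where for $v\in N(\sigma_t)$ and $x>0$, $\mathrm{Update}_t(v,x)$ does: let $b:=\sigma_t(v)$; for each $v'\in C(b)\cap N$ run $\mathrm{Update}_t(v',\pi_t(b)x)$ and call its return value $\psi_t(v')$; set $\omega_t(v):=\exp\!\left(\frac{-\eta\, d_t(b)}{\gamma\beta(b)+\pi_t(b)x}\right)\prod_{v'\in C(b)\cap N}\psi_t(v')$; for all $a\in C(v)$ set $\pi_{t+1}(a):=\frac{[a=b]\,\omega_t(v)\pi_t(a)+[a\ne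 b]\,\pi_t(a)}{1-(1-\omega_t(v))\pi_t(b)}$; return $\psi_t(v):=1-(1-\omega_t(v))\pi_t(b)$. For every $v\in N\setminus N(\sigma_t)$, $\pi_{t+1}(a):=\pi_t(a)$ for all $a\in C(v)$. *)

theory Defs
  imports Complex_Main
begin

record 'v game =
  root :: 'v
  nodes :: "'v set"
  ch :: "'v \<Rightarrow> 'v set"
  infosets :: "'v set"
  actions :: "'v set"

definition leaves :: "'v game \<Rightarrow> 'v set" where
  "leaves G = {v \<in> nodes G. ch G v = {}}"

definition edges :: "'v game \<Rightarrow> ('v \<times> 'v) set" where
  "edges G = {(u, w). u \<in> nodes G \<and> w \<in> ch G u}"

definition game_tree :: "'v game \<Rightarrow> bool" where
  "game_tree G \<longleftrightarrow>
     finite (nodes G) \<and> root G \<in> nodes G \<and>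
     (\<forall>v. v \<notin> nodes G \<longrightarrow> ch G v = {}) \<and>
     (\<forall>v \<in> nodes G. ch G v \<subseteq> nodes G) \<and>
     (\<forall>u \<in> nodes G. root G \<notin> ch G u) \<and>
     (\<forall>v \<in> nodes G - {root G}. \<exists>!u. u \<in> nodes G \<and> v \<in> ch G u) \<and>
     (\<forall>v \<in> nodes G. (root G, v) \<in> (edges G)\<^sup>*) \<and>
     infosets G \<union> actions G = nodes G - leaves G \<and>
     infosets G \<inter> actions G = {} \<and>
     root G \<in> infosets G \<and>
     (\<forall>v \<in> infosets G. ch G v \<subseteq> actions G \<and> card (ch G v) > 1) \<and>
     (\<forall>a \<in> actions G. ch G a \<subseteq> infosets G \<union> leaves G)"

definition par :: "'v game \<Rightarrow> 'v \<Rightarrow> 'v" where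
  "par G v = (THE u. u \<in> nodes G \<and> v \<in> ch G u)"

(* V(sigma) for a (possibly partial) strategy given as a map *)
inductive_set reach :: "'v game \<Rightarrow> ('v \<Rightarrow> 'v option) \<Rightarrow> 'v set"
  for G :: "'v game" and \<sigma> :: "'v \<Rightarrow> 'v option" where
  reach_root: "root G \<in> reach G \<sigma>"
| reach_inf: "v \<in> reach G \<sigma> \<Longrightarrow> v \<in> infosets G \<Longrightarrow> \<sigma> v = Some b \<Longrightarrow> b \<in> reach G \<sigma>"
| reach_act: "a \<in> reach G \<sigma> \<Longrightarrow> a \<in> actions G \<Longrightarrow> w \<in> ch G a \<Longrightarrow> w \<in> reach G \<sigma>"

definition is_strategy :: "'v game \<Rightarrow> ('v \<Rightarrow> 'v) \<Rightarrow> bool" where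
  "is_strategy G \<sigma> \<longleftrightarrow> (\<forall>v \<in> infosets G. \<sigma> v \<in> ch G v)"

definition reduce :: "'v game \<Rightarrow> ('v \<Rightarrow> 'v) \<Rightarrow> ('v \<Rightarrow> 'v option)" where
  "reduce G \<sigma> = (\<lambda>v. if v \<in> infosets G \<inter> reach G (Some \<circ> \<sigma>) then Some (\<sigma> v) else None)"

definition rstrats :: "'v game \<Rightarrow> ('v \<Rightarrow> 'v option) set" where
  "rstrats G = {reduce G \<sigma> | \<sigma>. is_strategy G \<sigma>}"

definition Nof :: "'v game \<Rightarrow> ('v \<Rightarrow> 'v option) \<Rightarrow> 'v set" where
  "Nof G \<rho> = infosets G \<inter> reach G \<rho>"

definition Aof :: "'v game \<Rightarrow> ('v \<Rightarrow> 'v option) \<Rightarrow> 'v set" where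
  "Aof G \<rho> = actions G \<inter> reach G \<rho>"

(* n and m, computed bottom-up; the fuel card(nodes G) exceeds the tree height *)
fun nfun :: "'v game \<Rightarrow> nat \<Rightarrow> 'v \<Rightarrow> nat" where
  "nfun G 0 v = 1"
| "nfun G (Suc k) v = (if v \<in> actions G then (\<Prod>w \<in> ch G v \<inter> infosets G. nfun G k w)
                        else (\<Sum>a \<in> ch G v. nfun G k a))"

fun mfun :: "'v game \<Rightarrow> nat \<Rightarrow> 'v \<Rightarrow> nat" where
  "mfun G 0 v = 0"
| "mfun G (Suc k) v = (if v \<in> actions G then 1 + (\<Sum>w \<in> ch G v \<inter> infosets G. mfun G k w)
                        else (\<Sum>a \<in> ch G v. mfun G k a))"

definition nn :: "'v game \<Rightarrow> 'v \<Rightarrow> nat" where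
  "nn G v = nfun G (card (nodes G)) v"

definition mm :: "'v game \<Rightarrow> 'v \<Rightarrow> nat" where
  "mm G v = mfun G (card (nodes G)) v"

fun betaf :: "'v game \<Rightarrow> nat \<Rightarrow> 'v \<Rightarrow> real" where
  "betaf G 0 v = 1"
| "betaf G (Suc k) v = (if v = root G then 1
                         else if v \<in> actions G then real (mm G v) * betaf G k (par G v)
                         else betaf G k (par G v) / real (mm G v))"

definition beta :: "'v game \<Rightarrow> 'v \<Rightarrow> real" where
  "beta G v = betaf G (card (nodes G)) v"

definition qprod :: "'v game \<Rightarrow> ('v \<Rightarrow> real) \<Rightarrow> 'v \<Rightarrow> real" where
  "qprod G \<pi> a = (\<Prod>a' \<in> actions G \<inter> {u. (u, a) \<in> (edges G)\<^sup>*}. \<pi> a')"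

definition eta :: "'v game \<Rightarrow> nat \<Rightarrow> real \<Rightarrow> real" where
  "eta G T \<epsilon> = inverse (sqrt ((6 * ln (real T) / \<epsilon> + 9 * (exp 1 - 2) / \<epsilon>\<^sup>2)
                       * (real (mm G (root G)) * real T / ln (real (nn G (root G))))))"

definition gam :: "'v game \<Rightarrow> nat \<Rightarrow> real \<Rightarrow> real" where
  "gam G T \<epsilon> = 6 * ln (real T) * eta G T \<epsilon> / \<epsilon>"

(* Update_t(v,x) return value psi_t(v), with fuel *)
fun psif :: "'v game \<Rightarrow> real \<Rightarrow> real \<Rightarrow> ('v \<Rightarrow> real) \<Rightarrow> ('v \<Rightarrow> 'v option)
              \<Rightarrow> ('v \<Rightarrow> real) \<Rightarrow> nat \<Rightarrow> 'v \<Rightarrow> real \<Rightarrow> real" where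
  "psif G \<eta> \<gamma> \<pi> \<sigma> d 0 v x = 1"
| "psif G \<eta> \<gamma> \<pi> \<sigma> d (Suc k) v x =
     (let b = the (\<sigma> v);
          \<omega> = exp (- \<eta> * d b / (\<gamma> * beta G b + \<pi> b * x))
              * (\<Prod>v' \<in> ch G b \<inter> infosets G. psif G \<eta> \<gamma> \<pi> \<sigma> d k v' (\<pi> b * x))
      in 1 - (1 - \<omega>) * \<pi> b)"

definition omegaf :: "'v game \<Rightarrow> real \<Rightarrow> real \<Rightarrow> ('v \<Rightarrow> real) \<Rightarrow> ('v \<Rightarrow> 'v option)
              \<Rightarrow> ('v \<Rightarrow> real) \<Rightarrow> 'v \<Rightarrow> real \<Rightarrow> real" where
  "omegaf G \<eta> \<gamma> \<pi> \<sigma> d v x =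
     (let b = the (\<sigma> v)
      in exp (- \<eta> * d b / (\<gamma> * beta G b + \<pi> b * x))
         * (\<Prod>v' \<in> ch G b \<inter> infosets G. psif G \<eta> \<gamma> \<pi> \<sigma> d (card (nodes G)) v' (\<pi> b * x)))"

definition psi :: "'v game \<Rightarrow> real \<Rightarrow> real \<Rightarrow> ('v \<Rightarrow> real) \<Rightarrow> ('v \<Rightarrow> 'v option)
              \<Rightarrow> ('v \<Rightarrow> real) \<Rightarrow> 'v \<Rightarrow> real \<Rightarrow> real" where
  "psi G \<eta> \<gamma> \<pi> \<sigma> d v x = psif G \<eta> \<gamma> \<pi> \<sigma> d (card (nodes G)) v x"

(* the argument x with which Update_t(v, .) is called: 1 at the root, q_t(p(v)) otherwise *)
definition xarg :: "'v game \<Rightarrow> ('v \<Rightarrow> real) \<Rightarrow> 'v \<Rightarrow> real" where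
  "xarg G \<pi> v = (if v = root G then 1 else qprod G \<pi> (par G v))"

definition pol_update :: "'v game \<Rightarrow> real \<Rightarrow> real \<Rightarrow> ('v \<Rightarrow> real) \<Rightarrow> ('v \<Rightarrow> 'v option)
              \<Rightarrow> ('v \<Rightarrow> real) \<Rightarrow> ('v \<Rightarrow> real)" where
  "pol_update G \<eta> \<gamma> \<pi> \<sigma> d = (\<lambda>a.
     if a \<in> actions G \<and> par G a \<in> Nof G \<sigma> then
       (let v = par G a; b = the (\<sigma> v);
            \<omega> = omegaf G \<eta> \<gamma> \<pi> \<sigma> d v (xarg G \<pi> v)
        in (if a = b then \<omega> * \<pi> a else \<pi> a) / (1 - (1 - \<omega>) * \<pi> b))
     else \<pi> a)"

definition pol_init :: "'v game \<Rightarrow> ('v \<Rightarrow> real)" where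
  "pol_init G = (\<lambda>a. if a \<in> actions G then real (nn G a) / real (nn G (par G a)) else 0)"

(* pol G T eps sig d k = pi_{k+1}, given the realized sampled strategies sig s and
   feedback vectors d s of the trials s = 1..k *)
fun pol :: "'v game \<Rightarrow> nat \<Rightarrow> real \<Rightarrow> (nat \<Rightarrow> 'v \<Rightarrow> 'v option) \<Rightarrow> (nat \<Rightarrow> 'v \<Rightarrow> real)
              \<Rightarrow> nat \<Rightarrow> ('v \<Rightarrow> real)" where
  "pol G T \<epsilon> sig d 0 = pol_init G"
| "pol G T \<epsilon> sig d (Suc k) =
     pol_update G (eta G T \<epsilon>) (gam G T \<epsilon>) (pol G T \<epsilon> sig d k) (sig (Suc k)) (d (Suc k))"

end

theory Submission
  imports Defs "HOL-Library.FuncSet"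
begin

text \<open>
  Fix the sampled strategy \<open>\<sigma>\<^sub>t\<close> and put \<open>e(a) = exp (-\<theta>\<^sub>t(a))\<close>. The right-hand side is the
  generating function \<open>\<Sum>_\<sigma> Pr[\<sigma>] \<Prod>_{a \<in> \<A>(\<sigma>)} e(a)\<close> of the random reduced strategy.
  Extending reduced strategies to total ones (the extra coordinates sum out to one) turns it
  into a sum over independent choices at all infosets, so it factorises along the tree: the
  generating function \<open>F(v)\<close> of the subtree at an infoset \<open>v\<close> satisfies
  \<open>F(v) = \<Sum>_{a \<in> C(v)} \<pi>(a) e(a) \<Prod>_{v' \<in> C(a) \<inter> N} F(v')\<close>.
  As \<open>e = 1\<close> off the sampled path, every subtree hanging off the path has \<open>F = 1\<close>, and the
  recursion collapses to \<open>F(v) = 1 - (1 - e(b) \<Prod>_{v'} F(v')) \<pi>(b)\<close> with \<open>b = \<sigma>\<^sub>t(v)\<close>, which is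
  the recursion by which \<open>Update\<^sub>t\<close> computes \<open>\<psi>\<^sub>t(v)\<close>. All that is needed of \<open>\<pi>\<^sub>t\<close> is that
  it is a policy, and the update keeps it one.
\<close>

section \<open>Sums over finite function spaces\<close>

lemma sum_PiE_Un_mult:
  fixes f g :: "('a \<Rightarrow> 'b) \<Rightarrow> 'c::comm_semiring_1"
  assumes "I \<inter> J = {}"
    and f: "\<And>\<tau> \<tau>'. \<forall>x\<in>I. \<tau> x = \<tau>' x \<and> \<tau> x \<in> S x \<Longrightarrow> f \<tau> = f \<tau>'"
    and g: "\<And>\<tau> \<tau>'. \<forall>x\<in>J. \<tau> x = \<tau>' x \<and> \<tau> x \<in> S x \<Longrightarrow> g \<tau> = g \<tau>'"
  shows "(\<Sum>\<tau>\<in>PiE (I \<union> J) S. f \<tau> * g \<tau>) = (\<Sum>\<tau>\<in>PiE I S. f \<tau>) * (\<Sum>\<tau>\<in>PiE J S. g \<tau>)"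
proof -
  define merge where "merge = (\<lambda>(p::'a\<Rightarrow>'b, q). (\<lambda>x. if x \<in> I then p x else q x))"
  have bij: "bij_betw merge (PiE I S \<times> PiE J S) (PiE (I \<union> J) S)"
    by (rule bij_betw_byWitness[where f'="\<lambda>\<tau>. (restrict \<tau> I, restrict \<tau> J)"])
       (use assms(1) in \<open>auto simp: merge_def PiE_iff extensional_def fun_eq_iff\<close>)
  have "(\<Sum>\<tau>\<in>PiE (I \<union> J) S. f \<tau> * g \<tau>) = (\<Sum>(p, q)\<in>PiE I S \<times> PiE J S. f (merge (p, q)) * g (merge (p, q)))"
    using sum.reindex_bij_betw[OF bij, of "\<lambda>\<tau>. f \<tau> * g \<tau>"] by (simp add: case_prod_beta)
  also have "\<dots> = (\<Sum>(p, q)\<in>PiE I S \<times> PiE J S. f p * g q)"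
  proof (rule sum.cong, simp, clarify)
    fix p q assume "p \<in> PiE I S" "q \<in> PiE J S"
    then have "f (merge (p, q)) = f p" "g (merge (p, q)) = g q"
      using assms(1) by (auto intro!: f g simp: merge_def)
    then show "f (merge (p, q)) * g (merge (p, q)) = f p * g q" by simp
  qed
  also have "\<dots> = (\<Sum>\<tau>\<in>PiE I S. f \<tau>) * (\<Sum>\<tau>\<in>PiE J S. g \<tau>)"
    by (simp add: sum.cartesian_product[symmetric] sum_product)
  finally show ?thesis .
qed

lemma sum_PiE_UN_prod:
  fixes f :: "'k \<Rightarrow> ('a \<Rightarrow> 'b) \<Rightarrow> 'c::comm_semiring_1"
  assumes "finite K" and "\<And>k k'. k \<in> K \<Longrightarrow> k' \<in> K \<Longrightarrow> k \<noteq> k' \<Longrightarrow> I k \<inter> I k' = {}"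
    and "\<And>k \<tau> \<tau>'. k \<in> K \<Longrightarrow> \<forall>x\<in>I k. \<tau> x = \<tau>' x \<and> \<tau> x \<in> S x \<Longrightarrow> f k \<tau> = f k \<tau>'"
  shows "(\<Sum>\<tau>\<in>PiE (\<Union>k\<in>K. I k) S. \<Prod>k\<in>K. f k \<tau>) = (\<Prod>k\<in>K. \<Sum>\<tau>\<in>PiE (I k) S. f k \<tau>)"
  using assms
proof (induction K rule: finite_induct)
  case (insert k0 K)
  have "I k0 \<inter> (\<Union>k\<in>K. I k) = {}"
    using insert.prems(1) insert.hyps(2) by blast
  then have "(\<Sum>\<tau>\<in>PiE (I k0 \<union> (\<Union>k\<in>K. I k)) S. f k0 \<tau> * (\<Prod>k\<in>K. f k \<tau>))
      = (\<Sum>\<tau>\<in>PiE (I k0) S. f k0 \<tau>) * (\<Sum>\<tau>\<in>PiE (\<Union>k\<in>K. I k) S. \<Prod>k\<in>K. f k \<tau>)"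
  proof (rule sum_PiE_Un_mult)
    show "(\<Prod>k\<in>K. f k \<tau>) = (\<Prod>k\<in>K. f k \<tau>')" if "\<forall>x\<in>(\<Union>k\<in>K. I k). \<tau> x = \<tau>' x \<and> \<tau> x \<in> S x" for \<tau> \<tau>'
      using insert.prems(2) that by (intro prod.cong refl) blast
  qed (use insert.prems(2) in blast)
  also have "(\<Sum>\<tau>\<in>PiE (\<Union>k\<in>K. I k) S. \<Prod>k\<in>K. f k \<tau>) = (\<Prod>k\<in>K. \<Sum>\<tau>\<in>PiE (I k) S. f k \<tau>)"
    using insert.prems by (intro insert.IH) blast+
  finally show ?case using insert.hyps by simp
qed simp

lemma sum_PiE_extensions_prod:
  fixes p :: "'a \<Rightarrow> 'b \<Rightarrow> 'c::comm_semiring_1"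
  assumes "finite I" "K \<subseteq> I" "\<And>u. u \<in> I \<Longrightarrow> finite (S u)" "\<And>u. u \<in> K \<Longrightarrow> c u \<in> S u"
    and "\<And>u. u \<in> I - K \<Longrightarrow> (\<Sum>b\<in>S u. p u b) = 1"
  shows "(\<Sum>\<tau>\<in>{\<tau>\<in>PiE I S. \<forall>u\<in>K. \<tau> u = c u}. \<Prod>u\<in>I - K. p u (\<tau> u)) = 1"
proof -
  define h where "h u b = (if u \<in> K then (if b = c u then 1 else 0) else p u b)" for u b
  have "(\<Sum>\<tau>\<in>{\<tau>\<in>PiE I S. \<forall>u\<in>K. \<tau> u = c u}. \<Prod>u\<in>I - K. p u (\<tau> u))
      = (\<Sum>\<tau>\<in>PiE I S. \<Prod>u\<in>I. h u (\<tau> u))"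
  proof -
    have "(\<Prod>u\<in>I. h u (\<tau> u)) = (\<Prod>u\<in>K. h u (\<tau> u)) * (\<Prod>u\<in>I - K. p u (\<tau> u))" for \<tau>
      using prod.subset_diff[OF assms(2,1), of "\<lambda>u. h u (\<tau> u)"] by (simp add: h_def mult.commute)
    moreover have "(\<Prod>u\<in>K. h u (\<tau> u)) = (if \<forall>u\<in>K. \<tau> u = c u then 1 else 0)" for \<tau>
      using finite_subset[OF assms(2,1)] by (auto simp: h_def intro: prod.neutral intro!: prod_zero)
    ultimately show ?thesis
      using assms(1,3) by (auto simp: sum.inter_filter finite_PiE intro!: sum.cong)
  qed
  also have "\<dots> = (\<Prod>u\<in>I. \<Sum>b\<in>S u. h u b)"
    by (rule prod_sum_PiE[symmetric]) (use assms in auto)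
  also have "\<dots> = 1"
  proof (rule prod.neutral, intro ballI)
    fix u assume "u \<in> I"
    then show "(\<Sum>b\<in>S u. h u b) = 1"
      using assms(3-5) by (cases "u \<in> K") (simp_all add: h_def sum.delta)
  qed
  finally show ?thesis .
qed

lemma one_minus_mult_pos:
  fixes p w :: real
  assumes "0 \<le> p" "p \<le> 1" "0 < w"
  shows "0 < 1 - (1 - w) * p"
proof (cases "p = 0")
  case False
  then have "0 < w * p" using assms by simp
  moreover have "1 - (1 - w) * p = (1 - p) + w * p" by (simp add: algebra_simps)
  ultimately show ?thesis using assms(2) by linarith
qed simp

lemma sum_reweight_one:
  fixes \<pi> :: "'a \<Rightarrow> real"
  assumes "finite S" "b \<in> S" "(\<Sum>a\<in>S. \<pi> a) = 1" "1 - (1 - \<omega>) * \<pi> b \<noteq> 0"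
  shows "(\<Sum>a\<in>S. (if a = b then \<omega> * \<pi> a else \<pi> a) / (1 - (1 - \<omega>) * \<pi> b)) = 1"
proof -
  have "(\<Sum>a\<in>S. if a = b then \<omega> * \<pi> a else \<pi> a) = \<omega> * \<pi> b + (\<Sum>a\<in>S - {b}. \<pi> a)"
    using assms(1,2) by (simp add: sum.remove)
  also have "\<dots> = 1 - (1 - \<omega>) * \<pi> b"
    using assms(1-3) by (simp add: sum_diff1 algebra_simps)
  finally show ?thesis
    using assms(4) by (simp add: sum_divide_distrib[symmetric])
qed

section \<open>Nodes reached by a strategy\<close>

lemma reach_cong:
  assumes "\<forall>u\<in>infosets G \<inter> reach G \<rho>. \<rho>' u = \<rho> u"
  shows "reach G \<rho>' = reach G \<rho>"
proof (intro equalityI subsetI)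
  fix x assume "x \<in> reach G \<rho>'"
  then show "x \<in> reach G \<rho>"
  proof induction
    case (reach_inf v b)
    then show ?case using assms by (metis IntI reach.reach_inf)
  qed (auto intro: reach.intros)
next
  fix x assume "x \<in> reach G \<rho>"
  then show "x \<in> reach G \<rho>'"
  proof induction
    case (reach_inf v b)
    then show ?case using assms by (metis IntI reach.reach_inf)
  qed (auto intro: reach.intros)
qed

definition reach_from :: "'v game \<Rightarrow> 'v \<Rightarrow> ('v \<Rightarrow> 'v) \<Rightarrow> 'v set" where
  "reach_from G v \<sigma> = reach (G\<lparr>root := v\<rparr>) (Some \<circ> \<sigma>)"

lemma reach_from_self: "v \<in> reach_from G v \<sigma>"
  unfolding reach_from_def using reach.reach_root[of "G\<lparr>root := v\<rparr>"] by simp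

lemma reach_from_infoset: "u \<in> reach_from G v \<sigma> \<Longrightarrow> u \<in> infosets G \<Longrightarrow> \<sigma> u \<in> reach_from G v \<sigma>"
  unfolding reach_from_def by (rule reach.reach_inf) simp_all

lemma reach_from_action:
  "a \<in> reach_from G v \<sigma> \<Longrightarrow> a \<in> actions G \<Longrightarrow> w \<in> ch G a \<Longrightarrow> w \<in> reach_from G v \<sigma>"
  unfolding reach_from_def by (rule reach.reach_act) simp_all

lemma reach_from_induct [consumes 1, case_names self infoset action]:
  assumes "x \<in> reach_from G v \<sigma>" and "P v"
    and "\<And>u. u \<in> reach_from G v \<sigma> \<Longrightarrow> P u \<Longrightarrow> u \<in> infosets G \<Longrightarrow> P (\<sigma> u)"
    and "\<And>a w. a \<in> reach_from G v \<sigma> \<Longrightarrow> P a \<Longrightarrow> a \<in> actions G \<Longrightarrow> w \<in> ch G a \<Longrightarrow> P w"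
  shows "P x"
  using assms(1) unfolding reach_from_def
proof induction
  case (reach_inf u b)
  then show ?case using assms(3) unfolding reach_from_def by auto
qed (use assms(2,4) in \<open>auto simp: reach_from_def\<close>)

lemma reach_from_cases [consumes 1, case_names self infoset action]:
  assumes "x \<in> reach_from G v \<sigma>"
  obtains "x = v"
  | u where "u \<in> reach_from G v \<sigma>" "u \<in> infosets G" "x = \<sigma> u"
  | a where "a \<in> reach_from G v \<sigma>" "a \<in> actions G" "x \<in> ch G a"
  using assms unfolding reach_from_def by (cases rule: reach.cases) auto

lemma reach_from_cong:
  "\<forall>u\<in>infosets G \<inter> reach_from G v \<sigma>. \<sigma>' u = \<sigma> u \<Longrightarrow> reach_from G v \<sigma>' = reach_from G v \<sigma>"
  unfolding reach_from_def by (rule reach_cong) simp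

lemma reach_from_trans: "w \<in> reach_from G v \<sigma> \<Longrightarrow> reach_from G w \<sigma> \<subseteq> reach_from G v \<sigma>"
proof
  fix x assume "w \<in> reach_from G v \<sigma>" "x \<in> reach_from G w \<sigma>"
  from this(2) show "x \<in> reach_from G v \<sigma>"
    by (induction rule: reach_from_induct)
       (use \<open>w \<in> reach_from G v \<sigma>\<close> in \<open>auto intro: reach_from_infoset reach_from_action\<close>)
qed

lemma reach_reduce: "reach G (reduce G \<sigma>) = reach_from G (root G) \<sigma>"
proof -
  have "reach G (reduce G \<sigma>) = reach G (Some \<circ> \<sigma>)"
    by (rule reach_cong) (simp add: reduce_def)
  then show ?thesis by (simp add: reach_from_def)
qed

lemma reduce_reached: "u \<in> infosets G \<Longrightarrow> u \<in> reach_from G (root G) \<sigma> \<Longrightarrow> reduce G \<sigma> u = Some (\<sigma> u)"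
  unfolding reduce_def by (simp add: reach_from_def)

section \<open>Game trees\<close>

locale tree_game =
  fixes G :: "'v game"
  assumes game_tree: "game_tree G"
begin

abbreviation "N \<equiv> infosets G"
abbreviation "A \<equiv> actions G"
abbreviation "E \<equiv> edges G"

lemma finite_nodes: "finite (nodes G)"
  using game_tree unfolding game_tree_def by blast

lemma root_in_nodes: "root G \<in> nodes G"
  using game_tree unfolding game_tree_def by blast

lemma ch_outside: "v \<notin> nodes G \<Longrightarrow> ch G v = {}"
  using game_tree unfolding game_tree_def by blast

lemma ch_subset_nodes: "ch G v \<subseteq> nodes G"
  using game_tree ch_outside unfolding game_tree_def by (cases "v \<in> nodes G") auto

lemma root_not_child: "root G \<notin> ch G u"
  using game_tree ch_outside unfolding game_tree_def by (cases "u \<in> nodes G") auto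

lemma parent_ex1: "v \<in> nodes G \<Longrightarrow> v \<noteq> root G \<Longrightarrow> \<exists>!u. u \<in> nodes G \<and> v \<in> ch G u"
  using game_tree unfolding game_tree_def by blast

lemma root_reaches: "v \<in> nodes G \<Longrightarrow> (root G, v) \<in> E\<^sup>*"
  using game_tree unfolding game_tree_def by blast

lemma infosets_Un_actions: "N \<union> A = nodes G - leaves G"
  using game_tree unfolding game_tree_def by blast

lemma infosets_actions_disjoint: "N \<inter> A = {}"
  using game_tree unfolding game_tree_def by blast

lemma root_infoset: "root G \<in> N"
  using game_tree unfolding game_tree_def by blast

lemma ch_infoset: "v \<in> N \<Longrightarrow> ch G v \<subseteq> A"
  using game_tree unfolding game_tree_def by blast

lemma ch_infoset_nonempty: "v \<in> N \<Longrightarrow> ch G v \<noteq> {}"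
  using game_tree unfolding game_tree_def by fastforce

lemma ch_action: "a \<in> A \<Longrightarrow> ch G a \<subseteq> N \<union> leaves G"
  using game_tree unfolding game_tree_def by blast

lemma finite_ch: "finite (ch G v)"
  using finite_nodes ch_subset_nodes by (rule finite_subset[rotated])

lemma finite_infosets: "finite N"
  using finite_nodes infosets_Un_actions by (metis Diff_subset finite_Un finite_subset)

lemma finite_actions: "finite A"
  using finite_nodes infosets_Un_actions by (metis Diff_subset finite_Un finite_subset)

lemma leaf_child: "a \<in> A \<Longrightarrow> w \<in> ch G a \<Longrightarrow> w \<notin> N \<Longrightarrow> ch G w = {} \<and> w \<notin> A"
  using ch_action infosets_Un_actions unfolding leaves_def by blast

lemma edges_iff: "(u, w) \<in> E \<longleftrightarrow> w \<in> ch G u"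
  using ch_outside unfolding edges_def by auto

lemma edges_nodes: "(u, w) \<in> E \<Longrightarrow> u \<in> nodes G \<and> w \<in> nodes G"
  unfolding edges_def using ch_subset_nodes by auto

lemma parent_unique: "w \<in> ch G u \<Longrightarrow> w \<in> ch G u' \<Longrightarrow> u = u'"
proof -
  assume w: "w \<in> ch G u" "w \<in> ch G u'"
  then have "u \<in> nodes G" "u' \<in> nodes G" "w \<in> nodes G" "w \<noteq> root G"
    using ch_outside ch_subset_nodes root_not_child by auto
  then show "u = u'" using parent_ex1 w by blast
qed

lemma par_eqI: "w \<in> ch G u \<Longrightarrow> par G w = u"
  unfolding par_def using ch_outside parent_unique by (intro the_equality) auto

lemma path_source_unique: "(w, x) \<in> E ^^ k \<Longrightarrow> (w', x) \<in> E ^^ k \<Longrightarrow> w = w'"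
proof (induction k arbitrary: x)
  case (Suc k)
  then obtain z z' where "(w, z) \<in> E ^^ k" "(z, x) \<in> E" "(w', z') \<in> E ^^ k" "(z', x) \<in> E"
    by (auto elim!: relpow_Suc_E)
  then show ?case using Suc.IH parent_unique by (metis edges_iff)
qed simp

lemma path_length_unique_root: "(root G, x) \<in> E ^^ n \<Longrightarrow> (root G, x) \<in> E ^^ m \<Longrightarrow> n = m"
proof (induction n arbitrary: x m)
  case 0
  then show ?case by (cases m) (auto simp: edges_iff root_not_child elim: relpow_Suc_E)
next
  case (Suc n)
  from Suc.prems(1) obtain z where z: "(root G, z) \<in> E ^^ n" "(z, x) \<in> E"
    by (auto elim: relpow_Suc_E)
  show ?case
  proof (cases m)
    case 0
    then show ?thesis using Suc.prems z by (auto simp: edges_iff root_not_child)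
  next
    case (Suc m')
    with Suc.prems(2) obtain z' where z': "(root G, z') \<in> E ^^ m'" "(z', x) \<in> E"
      by (auto elim: relpow_Suc_E)
    have "z = z'" using z z' parent_unique by (auto simp: edges_iff)
    then show ?thesis using Suc.IH[OF z(1)] z' Suc by auto
  qed
qed

lemma path_length_unique: "v \<in> nodes G \<Longrightarrow> (v, x) \<in> E ^^ n \<Longrightarrow> (v, x) \<in> E ^^ m \<Longrightarrow> n = m"
proof -
  assume "v \<in> nodes G" "(v, x) \<in> E ^^ n" "(v, x) \<in> E ^^ m"
  moreover obtain p where "(root G, v) \<in> E ^^ p"
    using root_reaches[OF \<open>v \<in> nodes G\<close>] rtrancl_power by blast
  ultimately have "(root G, x) \<in> E ^^ (p + n)" "(root G, x) \<in> E ^^ (p + m)"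
    using relpow_add by blast+
  then show "n = m" using path_length_unique_root by fastforce
qed

lemma child_not_ancestor: "w \<in> ch G v \<Longrightarrow> (w, v) \<notin> E\<^sup>*"
proof
  assume w: "w \<in> ch G v" and "(w, v) \<in> E\<^sup>*"
  then obtain k where "(w, v) \<in> E ^^ k" using rtrancl_power by blast
  moreover have "(v, w) \<in> E ^^ 1" using w by (simp add: edges_iff)
  ultimately have "(v, v) \<in> E ^^ (1 + k)" using relpow_add by blast
  moreover have "v \<in> nodes G" using w ch_outside by auto
  ultimately show False using path_length_unique[of v v 0 "1 + k"] by simp
qed

definition desc :: "'v \<Rightarrow> 'v set" where
  "desc v = {u. (v, u) \<in> E\<^sup>*}"

lemma self_in_desc: "v \<in> desc v"
  unfolding desc_def by simp

lemma desc_subset: "desc v \<subseteq> insert v (nodes G)"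
  unfolding desc_def by (auto elim: rtranclE dest: edges_nodes)

lemma finite_desc: "finite (desc v)"
  using desc_subset finite_nodes finite_subset by blast

lemma desc_unfold: "desc u = insert u (\<Union>w\<in>ch G u. desc w)"
  unfolding desc_def
  by (auto simp: edges_iff elim: converse_rtranclE intro: converse_rtrancl_into_rtrancl)

lemma desc_root: "desc (root G) = nodes G"
  using desc_subset root_in_nodes root_reaches unfolding desc_def by auto

lemma desc_trans: "u \<in> desc v \<Longrightarrow> desc u \<subseteq> desc v"
  unfolding desc_def by auto

lemma desc_child_subset: "w \<in> ch G v \<Longrightarrow> desc w \<subseteq> desc v"
  using desc_unfold by blast

lemma not_in_desc_child: "w \<in> ch G v \<Longrightarrow> v \<notin> desc w"
  using child_not_ancestor unfolding desc_def by blast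

lemma card_desc_child_less: "w \<in> ch G v \<Longrightarrow> card (desc w) < card (desc v)"
proof -
  assume "w \<in> ch G v"
  then have "desc w \<subset> desc v"
    using desc_child_subset not_in_desc_child self_in_desc by blast
  then show ?thesis using finite_desc psubset_card_mono by blast
qed

lemma desc_disjoint_same_depth:
  assumes "v \<in> nodes G" "(v, w) \<in> E ^^ k" "(v, w') \<in> E ^^ k" "w \<noteq> w'"
  shows "desc w \<inter> desc w' = {}"
proof (rule ccontr)
  assume "desc w \<inter> desc w' \<noteq> {}"
  then obtain x where "(w, x) \<in> E\<^sup>*" "(w', x) \<in> E\<^sup>*"
    unfolding desc_def by blast
  then obtain j j' where x: "(w, x) \<in> E ^^ j" "(w', x) \<in> E ^^ j'"
    using rtrancl_power by blast
  then have "(v, x) \<in> E ^^ (k + j)" "(v, x) \<in> E ^^ (k + j')"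
    using assms(2,3) relpow_add by blast+
  then have "j = j'" using path_length_unique[OF assms(1)] by fastforce
  then show False using path_source_unique[OF x(1)] x(2) assms(4) by simp
qed

definition next_infosets :: "'v \<Rightarrow> 'v set" where
  "next_infosets v = (\<Union>a\<in>ch G v. ch G a \<inter> N)"

lemma finite_next_infosets: "finite (next_infosets v)"
  unfolding next_infosets_def using finite_ch by auto

lemma next_infosets_desc_subset: "w \<in> next_infosets v \<Longrightarrow> desc w \<subseteq> desc v"
  unfolding next_infosets_def using desc_child_subset by blast

lemma not_in_desc_next_infoset: "w \<in> next_infosets v \<Longrightarrow> v \<notin> desc w"
  unfolding next_infosets_def using desc_child_subset not_in_desc_child by blast

lemma next_infosets_disjoint:
  assumes "v \<in> N" "w \<in> next_infosets v" "w' \<in> next_infosets v" "w \<noteq> w'"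
  shows "desc w \<inter> desc w' = {}"
proof (rule desc_disjoint_same_depth)
  show "v \<in> nodes G" using assms(1) infosets_Un_actions by blast
  have "(v, u) \<in> E ^^ 2" if u: "u \<in> next_infosets v" for u
  proof -
    obtain a where "(v, a) \<in> E" "(a, u) \<in> E"
      using u unfolding next_infosets_def by (auto simp: edges_iff)
    then show ?thesis by (simp add: numeral_2_eq_2 relcomp.relcompI)
  qed
  then show "(v, w) \<in> E ^^ 2" "(v, w') \<in> E ^^ 2" using assms(2,3) by blast+
qed (rule assms(4))

lemma infosets_desc_unfold:
  assumes "v \<in> N"
  shows "N \<inter> desc v = insert v (\<Union>w\<in>next_infosets v. N \<inter> desc w)"
proof (intro equalityI subsetI)
  fix x assume x: "x \<in> N \<inter> desc v"
  show "x \<in> insert v (\<Union>w\<in>next_infosets v. N \<inter> desc w)"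
  proof (cases "x = v")
    case False
    then obtain a where a: "a \<in> ch G v" "x \<in> desc a" using x desc_unfold[of v] by blast
    have "a \<in> A" using a ch_infoset assms by blast
    then have "x \<noteq> a" using x infosets_actions_disjoint by blast
    then obtain w where w: "w \<in> ch G a" "x \<in> desc w" using a desc_unfold[of a] by blast
    have "w \<in> N"
    proof (rule ccontr)
      assume "w \<notin> N"
      then have "ch G w = {}" using leaf_child \<open>a \<in> A\<close> w by blast
      then have "desc w = {w}" using desc_unfold[of w] by simp
      then show False using x w \<open>w \<notin> N\<close> by simp
    qed
    then show ?thesis using w a x unfolding next_infosets_def by blast
  qed simp
next
  fix x assume "x \<in> insert v (\<Union>w\<in>next_infosets v. N \<inter> desc w)"
  then show "x \<in> N \<inter> desc v"
    using assms self_in_desc next_infosets_desc_subset by blast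
qed

lemma reach_from_infoset_unfold:
  assumes "u \<in> N"
  shows "reach_from G u \<sigma> = insert u (reach_from G (\<sigma> u) \<sigma>)"
proof
  show "reach_from G u \<sigma> \<subseteq> insert u (reach_from G (\<sigma> u) \<sigma>)"
  proof
    fix x assume "x \<in> reach_from G u \<sigma>"
    then show "x \<in> insert u (reach_from G (\<sigma> u) \<sigma>)"
    proof (induction rule: reach_from_induct)
      case (infoset v)
      then show ?case
        using reach_from_self[of "\<sigma> u" G \<sigma>] reach_from_infoset[of v G "\<sigma> u" \<sigma>] by auto
    next
      case (action a w)
      then have "a \<noteq> u" using assms infosets_actions_disjoint by blast
      then show ?case using action reach_from_action[of a G "\<sigma> u" \<sigma> w] by auto
    qed simp
  qed
  have "\<sigma> u \<in> reach_from G u \<sigma>" using assms by (rule reach_from_infoset[OF reach_from_self])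
  then show "insert u (reach_from G (\<sigma> u) \<sigma>) \<subseteq> reach_from G u \<sigma>"
    by (simp add: reach_from_self reach_from_trans)
qed

lemma reach_from_action_unfold:
  assumes "a \<in> A"
  shows "reach_from G a \<sigma> = insert a (\<Union>w\<in>ch G a. reach_from G w \<sigma>)"
proof
  show "reach_from G a \<sigma> \<subseteq> insert a (\<Union>w\<in>ch G a. reach_from G w \<sigma>)"
  proof
    fix x assume "x \<in> reach_from G a \<sigma>"
    then show "x \<in> insert a (\<Union>w\<in>ch G a. reach_from G w \<sigma>)"
    proof (induction rule: reach_from_induct)
      case (infoset v)
      then have "v \<noteq> a" using assms infosets_actions_disjoint by blast
      then obtain w where "w \<in> ch G a" "v \<in> reach_from G w \<sigma>" using infoset.IH by blast
      then show ?case using reach_from_infoset[OF _ infoset.hyps(2)] by blast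
    next
      case (action b w)
      show ?case
      proof (cases "b = a")
        case True
        then show ?thesis using action.hyps(3) reach_from_self[of w G \<sigma>] by blast
      next
        case False
        then obtain w' where "w' \<in> ch G a" "b \<in> reach_from G w' \<sigma>" using action.IH by blast
        then show ?thesis using reach_from_action[OF _ action.hyps(2,3)] by blast
      qed
    qed simp
  qed
  have "w \<in> reach_from G a \<sigma>" if "w \<in> ch G a" for w
    using assms that by (rule reach_from_action[OF reach_from_self])
  then show "insert a (\<Union>w\<in>ch G a. reach_from G w \<sigma>) \<subseteq> reach_from G a \<sigma>"
    by (simp add: reach_from_self reach_from_trans UN_least)
qed

lemma reach_from_leaf:
  assumes "u \<notin> N" "u \<notin> A"
  shows "reach_from G u \<sigma> = {u}"
proof (intro equalityI subsetI)
  fix x assume "x \<in> reach_from G u \<sigma>"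
  then show "x \<in> {u}" by (induction rule: reach_from_induct) (use assms in auto)
qed (simp add: reach_from_self)

lemma actions_reach_from_unfold:
  assumes "v \<in> N" and "\<tau> v \<in> ch G v"
  shows "A \<inter> reach_from G v \<tau> = insert (\<tau> v) (\<Union>w\<in>ch G (\<tau> v) \<inter> N. A \<inter> reach_from G w \<tau>)"
proof -
  have "\<tau> v \<in> A" using assms ch_infoset by blast
  then have "reach_from G v \<tau> = insert v (insert (\<tau> v) (\<Union>w\<in>ch G (\<tau> v). reach_from G w \<tau>))"
    using reach_from_infoset_unfold[OF assms(1)] reach_from_action_unfold by simp
  moreover have "A \<inter> reach_from G w \<tau> = {}" if "w \<in> ch G (\<tau> v)" "w \<notin> N" for w
    using reach_from_leaf leaf_child[OF \<open>\<tau> v \<in> A\<close> that] that by simp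
  moreover have "v \<notin> A" using assms(1) infosets_actions_disjoint by blast
  ultimately show ?thesis using \<open>\<tau> v \<in> A\<close> by auto
qed

lemma reach_from_subset_desc: "\<forall>u\<in>N \<inter> desc v. \<tau> u \<in> ch G u \<Longrightarrow> reach_from G v \<tau> \<subseteq> desc v"
proof
  fix x assume \<tau>: "\<forall>u\<in>N \<inter> desc v. \<tau> u \<in> ch G u" and "x \<in> reach_from G v \<tau>"
  from this(2) show "x \<in> desc v"
  proof (induction rule: reach_from_induct)
    case self
    then show ?case by (rule self_in_desc)
  next
    case (infoset u)
    then show ?case using \<tau> desc_child_subset self_in_desc desc_trans by blast
  next
    case (action a w)
    then show ?case using desc_child_subset self_in_desc desc_trans by blast
  qed
qed

lemma reach_from_cong_desc:
  assumes "\<forall>u\<in>N \<inter> desc v. \<tau> u \<in> ch G u" and "\<forall>u\<in>N \<inter> desc v. \<tau>' u = \<tau> u"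
  shows "reach_from G v \<tau>' = reach_from G v \<tau>"
  using assms reach_from_subset_desc[OF assms(1)] by (intro reach_from_cong) blast

lemma reach_from_root_ancestor_closed:
  assumes "is_strategy G \<sigma>" and "x \<in> reach_from G (root G) \<sigma>" and "(w, x) \<in> E\<^sup>*"
  shows "w \<in> reach_from G (root G) \<sigma>"
  using assms(2,3)
proof (induction arbitrary: w rule: reach_from_induct)
  case self
  then show ?case
    by (cases rule: rtranclE) (auto simp: edges_iff root_not_child reach_from_self)
next
  case (infoset v)
  from infoset.prems show ?case
  proof (cases rule: rtranclE)
    case (step z)
    then have "z = v"
      using assms(1) infoset.hyps(2) parent_unique by (auto simp: edges_iff is_strategy_def)
    then show ?thesis using step infoset.IH by blast
  qed (simp add: reach_from_infoset[OF infoset.hyps])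
next
  case (action a y)
  from action.prems show ?case
  proof (cases rule: rtranclE)
    case (step z)
    then have "z = a" using action.hyps(3) parent_unique by (auto simp: edges_iff)
    then show ?thesis using step action.IH by blast
  qed (simp add: reach_from_action[OF action.hyps])
qed

lemma off_path_unreached:
  assumes \<sigma>: "is_strategy G \<sigma>" and "v \<in> N" "a \<in> ch G v" "a \<noteq> \<sigma> v"
  shows "desc a \<inter> reach_from G (root G) \<sigma> = {}"
proof -
  have "a \<notin> reach_from G (root G) \<sigma>"
  proof
    assume "a \<in> reach_from G (root G) \<sigma>"
    then show False
    proof (cases rule: reach_from_cases)
      case self
      then show ?thesis using assms(3) root_not_child by simp
    next
      case (infoset u)
      then have "a \<in> ch G u" using \<sigma> unfolding is_strategy_def by blast
      then have "u = v" using parent_unique[OF assms(3)] by simp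
      then show ?thesis using infoset assms(4) by simp
    next
      case (action p)
      then have "p = v" using parent_unique[OF assms(3)] by simp
      then show ?thesis using action assms(2) infosets_actions_disjoint by blast
    qed
  qed
  moreover have "a \<in> reach_from G (root G) \<sigma>" if "x \<in> desc a \<inter> reach_from G (root G) \<sigma>" for x
    using reach_from_root_ancestor_closed[OF \<sigma>, of x a] that unfolding desc_def by blast
  ultimately show ?thesis by blast
qed

definition ancestors :: "'v \<Rightarrow> 'v set" where
  "ancestors v = {u. (u, v) \<in> E\<^sup>*}"

lemma ancestors_child: "w \<in> ch G p \<Longrightarrow> ancestors w = insert w (ancestors p)"
proof (intro equalityI subsetI)
  fix u assume w: "w \<in> ch G p" and "u \<in> ancestors w"
  then have "(u, w) \<in> E\<^sup>*" unfolding ancestors_def by simp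
  then show "u \<in> insert w (ancestors p)"
  proof (cases rule: rtranclE)
    case (step z)
    then have "z = p" using w parent_unique by (simp add: edges_iff)
    then show ?thesis using step unfolding ancestors_def by simp
  qed simp
next
  fix u assume "w \<in> ch G p" "u \<in> insert w (ancestors p)"
  then show "u \<in> ancestors w"
    unfolding ancestors_def by (auto simp: edges_iff[symmetric] intro: rtrancl_into_rtrancl)
qed

lemma ancestors_root: "ancestors (root G) = {root G}"
proof (intro equalityI subsetI)
  fix u assume "u \<in> ancestors (root G)"
  then have "(u, root G) \<in> E\<^sup>*" unfolding ancestors_def by simp
  then show "u \<in> {root G}"
    by (cases rule: rtranclE) (auto simp: edges_iff root_not_child)
qed (simp add: ancestors_def)

lemma finite_ancestors: "finite (ancestors v)"
proof -
  have "ancestors v \<subseteq> insert v (nodes G)"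
    unfolding ancestors_def by (auto elim: converse_rtranclE dest: edges_nodes)
  then show ?thesis using finite_nodes finite_subset by blast
qed

lemma qprod_ancestors: "qprod G \<pi> a = (\<Prod>u\<in>A \<inter> ancestors a. \<pi> u)"
  unfolding qprod_def ancestors_def by (simp add: Int_def)

lemma qprod_root_child: "c \<in> ch G (root G) \<Longrightarrow> qprod G \<pi> c = \<pi> c"
proof -
  assume c: "c \<in> ch G (root G)"
  then have "A \<inter> ancestors c = {c}"
    using ancestors_child[OF c] ancestors_root ch_infoset root_infoset infosets_actions_disjoint
    by auto
  then show ?thesis by (simp add: qprod_ancestors)
qed

lemma qprod_next:
  assumes "b \<in> A" "w \<in> ch G b" "w \<in> N" "c \<in> ch G w"
  shows "qprod G \<pi> c = \<pi> c * qprod G \<pi> b"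
proof -
  have "c \<in> A" using assms(3,4) ch_infoset by blast
  then have "A \<inter> ancestors c = insert c (A \<inter> ancestors b)"
    using ancestors_child[OF assms(4)] ancestors_child[OF assms(2)] assms(3) infosets_actions_disjoint
    by auto
  moreover have "c \<notin> ancestors b"
  proof
    assume "c \<in> ancestors b"
    then have "b \<in> desc w"
      using desc_child_subset[OF assms(4)] unfolding ancestors_def desc_def by blast
    then show False using not_in_desc_child[OF assms(2)] by simp
  qed
  ultimately show ?thesis using finite_ancestors by (simp add: qprod_ancestors)
qed

lemma nfun_pos: "u \<in> N \<union> A \<Longrightarrow> 0 < nfun G k u"
proof (induction k arbitrary: u)
  case (Suc k)
  show ?case
  proof (cases "u \<in> A")
    case True
    have "0 < prod (nfun G k) (ch G u \<inter> N)" using Suc.IH by (intro prod_pos) blast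
    then show ?thesis using True by simp
  next
    case False
    then have "u \<in> N" using Suc.prems by blast
    then have "\<forall>a\<in>ch G u. 0 < nfun G k a" using Suc.IH ch_infoset by blast
    then show ?thesis
      using False \<open>u \<in> N\<close> ch_infoset_nonempty finite_ch by (simp add: sum_pos)
  qed
qed simp

lemma nfun_fuel_indep: "card (desc u) \<le> k \<Longrightarrow> card (desc u) \<le> k' \<Longrightarrow> nfun G k u = nfun G k' u"
proof (induction k arbitrary: u k')
  case 0
  then show ?case using finite_desc self_in_desc by (metis card_0_eq empty_iff le_0_eq)
next
  case (Suc k)
  then obtain k'' where k': "k' = Suc k''"
    using finite_desc self_in_desc by (metis card_0_eq empty_iff le_0_eq not0_implies_Suc)
  have "nfun G k w = nfun G k'' w" if "w \<in> ch G u" for w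
    using Suc.IH card_desc_child_less[OF that] Suc.prems k' by simp
  then have "prod (nfun G k) (ch G u \<inter> N) = prod (nfun G k'') (ch G u \<inter> N)"
    "sum (nfun G k) (ch G u) = sum (nfun G k'') (ch G u)"
    by (auto intro: prod.cong sum.cong)
  then show ?case unfolding k' by simp
qed

lemma nn_infoset: "v \<in> N \<Longrightarrow> nn G v = (\<Sum>a\<in>ch G v. nn G a)"
proof -
  assume v: "v \<in> N"
  then have "v \<in> nodes G" using infosets_Un_actions by blast
  then have card: "card (desc v) \<le> card (nodes G)"
    using desc_subset finite_nodes by (metis card_mono insert_absorb)
  then obtain m where m: "card (nodes G) = Suc m"
    using finite_desc self_in_desc by (metis card_0_eq empty_iff le_0_eq not0_implies_Suc)
  have "nfun G m a = nn G a" if "a \<in> ch G v" for a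
    unfolding nn_def m using card_desc_child_less[OF that] card m by (intro nfun_fuel_indep) auto
  then show ?thesis
    unfolding nn_def m using v infosets_actions_disjoint by (auto cong: sum.cong)
qed

section \<open>Policies\<close>

definition is_policy :: "('v \<Rightarrow> real) \<Rightarrow> bool" where
  "is_policy \<pi> \<longleftrightarrow> (\<forall>a\<in>A. 0 \<le> \<pi> a) \<and> (\<forall>u\<in>N. (\<Sum>b\<in>ch G u. \<pi> b) = 1)"

lemma policy_nonneg: "is_policy \<pi> \<Longrightarrow> a \<in> A \<Longrightarrow> 0 \<le> \<pi> a"
  unfolding is_policy_def by blast

lemma policy_sum: "is_policy \<pi> \<Longrightarrow> u \<in> N \<Longrightarrow> (\<Sum>b\<in>ch G u. \<pi> b) = 1"
  unfolding is_policy_def by blast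

lemma policy_le_one:
  assumes "is_policy \<pi>" "v \<in> N" "b \<in> ch G v"
  shows "\<pi> b \<le> 1"
proof -
  have "\<pi> b \<le> (\<Sum>a\<in>ch G v. \<pi> a)"
    using assms ch_infoset finite_ch policy_nonneg[OF assms(1)] by (intro member_le_sum) auto
  then show ?thesis using policy_sum[OF assms(1,2)] by simp
qed

lemma policy_strategy_bounds:
  assumes "is_policy \<pi>" "is_strategy G \<sigma>" "v \<in> N"
  shows "0 \<le> \<pi> (\<sigma> v)" "\<pi> (\<sigma> v) \<le> 1"
  using assms policy_nonneg policy_le_one ch_infoset unfolding is_strategy_def by blast+

lemma policy_init: "is_policy (pol_init G)"
  unfolding is_policy_def
proof
  show "\<forall>a\<in>A. 0 \<le> pol_init G a" by (simp add: pol_init_def)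
  show "\<forall>u\<in>N. (\<Sum>b\<in>ch G u. pol_init G b) = 1"
  proof
    fix u assume u: "u \<in> N"
    have "(\<Sum>b\<in>ch G u. pol_init G b) = (\<Sum>b\<in>ch G u. real (nn G b) / real (nn G u))"
      using ch_infoset[OF u] par_eqI unfolding pol_init_def by (intro sum.cong) auto
    also have "\<dots> = real (\<Sum>b\<in>ch G u. nn G b) / real (nn G u)"
      by (simp add: sum_divide_distrib)
    also have "\<dots> = 1"
    proof -
      have "0 < nn G u" unfolding nn_def using u by (intro nfun_pos) blast
      then show ?thesis by (simp add: nn_infoset[OF u, symmetric] del: of_nat_sum)
    qed
    finally show "(\<Sum>b\<in>ch G u. pol_init G b) = 1" .
  qed
qed

lemma psif_pos:
  assumes \<pi>: "is_policy \<pi>" and \<sigma>: "is_strategy G \<sigma>"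
  shows "v \<in> N \<Longrightarrow> v \<in> reach_from G (root G) \<sigma> \<Longrightarrow> 0 < psif G \<eta> \<gamma> \<pi> (reduce G \<sigma>) d k v x"
proof (induction k arbitrary: v x)
  case (Suc k)
  define b where "b = \<sigma> v"
  have bA: "b \<in> A" using \<sigma> Suc.prems(1) ch_infoset unfolding b_def is_strategy_def by blast
  have bR: "b \<in> reach_from G (root G) \<sigma>"
    unfolding b_def using Suc.prems by (rule reach_from_infoset[rotated])
  have "0 < psif G \<eta> \<gamma> \<pi> (reduce G \<sigma>) d k w (\<pi> b * x)" if "w \<in> ch G b \<inter> N" for w
    using Suc.IH that reach_from_action[OF bR bA] by blast
  then have "0 < (\<Prod>w\<in>ch G b \<inter> N. psif G \<eta> \<gamma> \<pi> (reduce G \<sigma>) d k w (\<pi> b * x))"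
    by (rule prod_pos)
  then have "0 < 1 - (1 - exp (- \<eta> * d b / (\<gamma> * beta G b + \<pi> b * x))
      * (\<Prod>w\<in>ch G b \<inter> N. psif G \<eta> \<gamma> \<pi> (reduce G \<sigma>) d k w (\<pi> b * x))) * \<pi> b"
    unfolding b_def using policy_strategy_bounds[OF \<pi> \<sigma> Suc.prems(1)]
    by (intro one_minus_mult_pos) auto
  moreover have "the (reduce G \<sigma> v) = b"
    unfolding b_def by (simp add: reduce_reached[OF Suc.prems])
  ultimately show ?case by (simp add: Let_def)
qed simp

lemma omegaf_pos:
  assumes "is_policy \<pi>" and \<sigma>: "is_strategy G \<sigma>"
    and "v \<in> N" "v \<in> reach_from G (root G) \<sigma>"
  shows "0 < omegaf G \<eta> \<gamma> \<pi> (reduce G \<sigma>) d v x"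
proof -
  have b: "\<sigma> v \<in> A" using \<sigma> assms(3) ch_infoset unfolding is_strategy_def by blast
  have bR: "\<sigma> v \<in> reach_from G (root G) \<sigma>" using assms(3,4) by (rule reach_from_infoset[rotated])
  have "0 < (\<Prod>w\<in>ch G (\<sigma> v) \<inter> N. psif G \<eta> \<gamma> \<pi> (reduce G \<sigma>) d (card (nodes G)) w (\<pi> (\<sigma> v) * x))"
    using psif_pos[OF assms(1,2)] reach_from_action[OF bR b] by (intro prod_pos) blast
  moreover have "the (reduce G \<sigma> v) = \<sigma> v" by (simp add: reduce_reached[OF assms(3,4)])
  ultimately show ?thesis unfolding omegaf_def by (simp add: Let_def)
qed

lemma pol_update_reduce:
  fixes \<eta> \<gamma> :: real and \<pi> d :: "'v \<Rightarrow> real" and \<sigma> :: "'v \<Rightarrow> 'v"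
  assumes "a \<in> A"
  defines "\<omega> \<equiv> \<lambda>v. omegaf G \<eta> \<gamma> \<pi> (reduce G \<sigma>) d v (xarg G \<pi> v)"
  shows "pol_update G \<eta> \<gamma> \<pi> (reduce G \<sigma>) d a =
    (if par G a \<in> N \<inter> reach_from G (root G) \<sigma>
     then (if a = \<sigma> (par G a) then \<omega> (par G a) * \<pi> a else \<pi> a)
          / (1 - (1 - \<omega> (par G a)) * \<pi> (\<sigma> (par G a)))
     else \<pi> a)"
proof -
  have "Nof G (reduce G \<sigma>) = N \<inter> reach_from G (root G) \<sigma>"
    unfolding Nof_def reach_reduce ..
  moreover have "the (reduce G \<sigma> u) = \<sigma> u" if "u \<in> N \<inter> reach_from G (root G) \<sigma>" for u
    using that by (simp add: reduce_reached)
  ultimately show ?thesis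
    using assms(1) unfolding pol_update_def \<omega>_def by (simp add: Let_def)
qed

lemma policy_update:
  assumes \<pi>: "is_policy \<pi>" and "\<rho> \<in> rstrats G"
  shows "is_policy (pol_update G \<eta> \<gamma> \<pi> \<rho> d)"
proof -
  obtain \<sigma> where \<sigma>: "is_strategy G \<sigma>" and \<rho>: "\<rho> = reduce G \<sigma>"
    using assms(2) unfolding rstrats_def by blast
  define R where "R = reach_from G (root G) \<sigma>"
  define \<omega> where "\<omega> v = omegaf G \<eta> \<gamma> \<pi> \<rho> d v (xarg G \<pi> v)" for v
  define den where "den v = 1 - (1 - \<omega> v) * \<pi> (\<sigma> v)" for v
  have update: "pol_update G \<eta> \<gamma> \<pi> \<rho> d a = (if par G a \<in> N \<inter> R then
      (if a = \<sigma> (par G a) then \<omega> (par G a) * \<pi> a else \<pi> a) / den (par G a) else \<pi> a)"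
    if "a \<in> A" for a
    unfolding \<rho> R_def \<omega>_def den_def using that by (rule pol_update_reduce)
  have \<omega>_pos: "0 < \<omega> v" if "v \<in> N \<inter> R" for v
    using omegaf_pos[OF \<pi> \<sigma>] that unfolding \<omega>_def \<rho> R_def by blast
  have den_pos: "0 < den v" if "v \<in> N \<inter> R" for v
    unfolding den_def using that policy_strategy_bounds[OF \<pi> \<sigma>]
    by (intro one_minus_mult_pos \<omega>_pos) auto
  show ?thesis
    unfolding is_policy_def
  proof (intro conjI ballI)
    fix a assume a: "a \<in> A"
    have "0 < \<omega> (par G a)" "0 < den (par G a)" if "par G a \<in> N \<inter> R"
      using \<omega>_pos den_pos that by blast+
    then show "0 \<le> pol_update G \<eta> \<gamma> \<pi> \<rho> d a"
      unfolding update[OF a] using policy_nonneg[OF \<pi> a] by (auto intro: divide_nonneg_pos)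
  next
    fix u assume u: "u \<in> N"
    have child: "a \<in> A" "par G a = u" if "a \<in> ch G u" for a
      using that u ch_infoset par_eqI by blast+
    show "(\<Sum>a\<in>ch G u. pol_update G \<eta> \<gamma> \<pi> \<rho> d a) = 1"
    proof (cases "u \<in> R")
      case True
      have "\<sigma> u \<in> ch G u" using \<sigma> u unfolding is_strategy_def by blast
      moreover have "den u \<noteq> 0" using den_pos True u by force
      ultimately have "(\<Sum>a\<in>ch G u. (if a = \<sigma> u then \<omega> u * \<pi> a else \<pi> a) / den u) = 1"
        unfolding den_def using finite_ch policy_sum[OF \<pi> u] by (intro sum_reweight_one)
      moreover have "(\<Sum>a\<in>ch G u. pol_update G \<eta> \<gamma> \<pi> \<rho> d a)
          = (\<Sum>a\<in>ch G u. (if a = \<sigma> u then \<omega> u * \<pi> a else \<pi> a) / den u)"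
        using True u child update by (intro sum.cong) auto
      ultimately show ?thesis by simp
    next
      case False
      then show ?thesis using child update policy_sum[OF \<pi> u] by (simp cong: sum.cong)
    qed
  qed
qed

lemma policy_pol:
  assumes "\<And>s. s \<in> {1..T} \<Longrightarrow> sig s \<in> rstrats G"
  shows "k \<le> T \<Longrightarrow> is_policy (pol G T \<epsilon> sig d k)"
proof (induction k)
  case (Suc k)
  then show ?case using assms policy_update by simp
qed (simp add: policy_init)

section \<open>Generating functions of subtrees\<close>

lemma finite_infosets_desc: "finite (N \<inter> desc v)"
  using finite_desc by blast

lemma sum_policy_prod_eq_one:
  assumes "is_policy \<pi>" "I \<subseteq> N"
  shows "(\<Sum>\<tau>\<in>PiE I (ch G). \<Prod>u\<in>I. \<pi> (\<tau> u)) = 1"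
  using sum_PiE_extensions_prod[of I "{}" "ch G" undefined "\<lambda>_. \<pi>"] assms finite_infosets finite_ch
    policy_sum[OF assms(1)] by (auto intro: finite_subset)

lemma prod_policy_desc_unfold:
  assumes "v \<in> N"
  shows "(\<Prod>u\<in>N \<inter> desc v. \<pi> (\<tau> u)) = \<pi> (\<tau> v) * (\<Prod>w\<in>next_infosets v. \<Prod>u\<in>N \<inter> desc w. \<pi> (\<tau> u))"
proof -
  have "finite (\<Union>w\<in>next_infosets v. N \<inter> desc w)"
    using finite_next_infosets finite_infosets_desc by blast
  moreover have "v \<notin> (\<Union>w\<in>next_infosets v. N \<inter> desc w)"
    using not_in_desc_next_infoset by blast
  ultimately have "(\<Prod>u\<in>N \<inter> desc v. \<pi> (\<tau> u)) = \<pi> (\<tau> v) * (\<Prod>u\<in>(\<Union>w\<in>next_infosets v. N \<inter> desc w). \<pi> (\<tau> u))"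
    unfolding infosets_desc_unfold[OF assms] by (rule prod.insert)
  also have "(\<Prod>u\<in>(\<Union>w\<in>next_infosets v. N \<inter> desc w). \<pi> (\<tau> u))
      = (\<Prod>w\<in>next_infosets v. \<Prod>u\<in>N \<inter> desc w. \<pi> (\<tau> u))"
    using finite_next_infosets finite_infosets_desc next_infosets_disjoint[OF assms]
    by (intro prod.UNION_disjoint) blast+
  finally show ?thesis .
qed

lemma prod_reached_actions_unfold:
  assumes v: "v \<in> N" and \<tau>: "\<forall>u\<in>N \<inter> desc v. \<tau> u \<in> ch G u"
  shows "(\<Prod>a\<in>A \<inter> reach_from G v \<tau>. e a)
    = e (\<tau> v) * (\<Prod>w\<in>next_infosets v. if w \<in> ch G (\<tau> v) then \<Prod>a\<in>A \<inter> reach_from G w \<tau>. e a else 1)"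
proof -
  define W where "W = ch G (\<tau> v) \<inter> N"
  have \<tau>v: "\<tau> v \<in> ch G v" using \<tau> v self_in_desc by blast
  have W: "W \<subseteq> next_infosets v" using \<tau>v unfolding W_def next_infosets_def by blast
  have reached: "A \<inter> reach_from G w \<tau> \<subseteq> desc w" if "w \<in> W" for w
    using reach_from_subset_desc \<tau> next_infosets_desc_subset W that by blast
  have finite_W: "finite W" unfolding W_def using finite_ch by blast
  have finite_reached: "\<forall>w\<in>W. finite (A \<inter> reach_from G w \<tau>)"
    using reached finite_desc finite_subset by blast
  have "finite (\<Union>w\<in>W. A \<inter> reach_from G w \<tau>)"
    using finite_W finite_reached by blast
  moreover have "\<tau> v \<notin> (\<Union>w\<in>W. A \<inter> reach_from G w \<tau>)"
    using reached not_in_desc_child unfolding W_def by blast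
  ultimately have "(\<Prod>a\<in>A \<inter> reach_from G v \<tau>. e a) = e (\<tau> v) * (\<Prod>a\<in>(\<Union>w\<in>W. A \<inter> reach_from G w \<tau>). e a)"
    unfolding actions_reach_from_unfold[of v \<tau>, OF v \<tau>v] W_def[symmetric] by (rule prod.insert)
  also have "(\<Prod>a\<in>(\<Union>w\<in>W. A \<inter> reach_from G w \<tau>). e a) = (\<Prod>w\<in>W. \<Prod>a\<in>A \<inter> reach_from G w \<tau>. e a)"
  proof (rule prod.UNION_disjoint[OF finite_W finite_reached])
    show "\<forall>w\<in>W. \<forall>w'\<in>W. w \<noteq> w' \<longrightarrow> A \<inter> reach_from G w \<tau> \<inter> (A \<inter> reach_from G w' \<tau>) = {}"
    proof (intro ballI impI)
      fix w w' assume "w \<in> W" "w' \<in> W" "w \<noteq> w'"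
      then have "desc w \<inter> desc w' = {}" using next_infosets_disjoint[OF v] W by blast
      then show "A \<inter> reach_from G w \<tau> \<inter> (A \<inter> reach_from G w' \<tau>) = {}"
        using reached[OF \<open>w \<in> W\<close>] reached[OF \<open>w' \<in> W\<close>] by blast
    qed
  qed
  also have "\<dots> = (\<Prod>w\<in>next_infosets v. if w \<in> ch G (\<tau> v) then \<Prod>a\<in>A \<inter> reach_from G w \<tau>. e a else 1)"
  proof -
    have "{w \<in> next_infosets v. w \<in> ch G (\<tau> v)} = W" using W unfolding W_def next_infosets_def by blast
    then show ?thesis by (simp flip: prod.inter_filter[OF finite_next_infosets])
  qed
  finally show ?thesis .
qed

lemma sum_PiE_infosets_desc_split:
  fixes f :: "'v \<Rightarrow> ('v \<Rightarrow> 'v) \<Rightarrow> real"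
  assumes v: "v \<in> N"
    and f: "\<And>w \<tau> \<tau>'. w \<in> next_infosets v \<Longrightarrow> \<forall>x\<in>N \<inter> desc w. \<tau> x = \<tau>' x \<and> \<tau> x \<in> ch G x \<Longrightarrow> f w \<tau> = f w \<tau>'"
  shows "(\<Sum>\<tau>\<in>PiE (N \<inter> desc v) (ch G). P (\<tau> v) * (\<Prod>w\<in>next_infosets v. f w \<tau>))
    = (\<Sum>b\<in>ch G v. P b) * (\<Prod>w\<in>next_infosets v. \<Sum>\<tau>\<in>PiE (N \<inter> desc w) (ch G). f w \<tau>)"
proof -
  define J where "J = (\<Union>w\<in>next_infosets v. N \<inter> desc w)"
  have decomp: "N \<inter> desc v = {v} \<union> J" and disjoint: "{v} \<inter> J = {}"
    unfolding J_def using infosets_desc_unfold[OF v] not_in_desc_next_infoset by auto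
  have "(\<Sum>\<tau>\<in>PiE (N \<inter> desc v) (ch G). P (\<tau> v) * (\<Prod>w\<in>next_infosets v. f w \<tau>))
      = (\<Sum>\<tau>\<in>PiE {v} (ch G). P (\<tau> v)) * (\<Sum>\<tau>\<in>PiE J (ch G). \<Prod>w\<in>next_infosets v. f w \<tau>)"
    unfolding decomp
  proof (rule sum_PiE_Un_mult[OF disjoint])
    show "(\<Prod>w\<in>next_infosets v. f w \<tau>) = (\<Prod>w\<in>next_infosets v. f w \<tau>')"
      if "\<forall>x\<in>J. \<tau> x = \<tau>' x \<and> \<tau> x \<in> ch G x" for \<tau> \<tau>'
      using that unfolding J_def by (intro prod.cong refl f) auto
  qed simp
  also have "(\<Sum>\<tau>\<in>PiE {v} (ch G). P (\<tau> v)) = (\<Sum>b\<in>ch G v. P b)"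
    using prod_sum_PiE[of "{v}" "ch G" "\<lambda>_. P"] finite_ch by simp
  also have "(\<Sum>\<tau>\<in>PiE J (ch G). \<Prod>w\<in>next_infosets v. f w \<tau>)
      = (\<Prod>w\<in>next_infosets v. \<Sum>\<tau>\<in>PiE (N \<inter> desc w) (ch G). f w \<tau>)"
    unfolding J_def using finite_next_infosets next_infosets_disjoint[OF v] f
    by (intro sum_PiE_UN_prod) blast+
  finally show ?thesis .
qed

definition subtree_weight :: "('v \<Rightarrow> real) \<Rightarrow> ('v \<Rightarrow> real) \<Rightarrow> 'v \<Rightarrow> ('v \<Rightarrow> 'v) \<Rightarrow> real" where
  "subtree_weight \<pi> e v \<tau> = (\<Prod>u\<in>N \<inter> desc v. \<pi> (\<tau> u)) * (\<Prod>a\<in>A \<inter> reach_from G v \<tau>. e a)"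

text \<open>For a policy \<open>\<pi>\<close>, the expectation of \<open>\<Prod>_{a \<in> \<A>(\<sigma>)} e(a)\<close> when the moves \<open>\<sigma>\<close> at the
  infosets below \<open>v\<close> are drawn independently from \<open>\<pi>\<close>.\<close>

definition subtree_gf :: "('v \<Rightarrow> real) \<Rightarrow> ('v \<Rightarrow> real) \<Rightarrow> 'v \<Rightarrow> real" where
  "subtree_gf \<pi> e v = (\<Sum>\<tau>\<in>PiE (N \<inter> desc v) (ch G). subtree_weight \<pi> e v \<tau>)"

lemma subtree_weight_cong:
  assumes "\<forall>x\<in>N \<inter> desc w. \<tau> x = \<tau>' x \<and> \<tau> x \<in> ch G x"
  shows "subtree_weight \<pi> e w \<tau> = subtree_weight \<pi> e w \<tau>'"
proof -
  have "\<forall>u\<in>N \<inter> desc w. \<tau> u \<in> ch G u" using assms by blast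
  moreover have "\<forall>u\<in>N \<inter> desc w. \<tau>' u = \<tau> u" using assms by auto
  ultimately have "reach_from G w \<tau>' = reach_from G w \<tau>" by (rule reach_from_cong_desc)
  moreover have "(\<Prod>u\<in>N \<inter> desc w. \<pi> (\<tau> u)) = (\<Prod>u\<in>N \<inter> desc w. \<pi> (\<tau>' u))"
    using assms by (intro prod.cong) auto
  ultimately show ?thesis unfolding subtree_weight_def by simp
qed

lemma subtree_weight_unfold:
  assumes v: "v \<in> N" and \<tau>: "\<forall>u\<in>N \<inter> desc v. \<tau> u \<in> ch G u"
  shows "subtree_weight \<pi> e v \<tau> = \<pi> (\<tau> v) * e (\<tau> v)
    * (\<Prod>w\<in>next_infosets v. subtree_weight \<pi> (if w \<in> ch G (\<tau> v) then e else (\<lambda>_. 1)) w \<tau>)"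
proof -
  have weight: "subtree_weight \<pi> (if w \<in> ch G (\<tau> v) then e else (\<lambda>_. 1)) w \<tau>
      = (\<Prod>u\<in>N \<inter> desc w. \<pi> (\<tau> u)) * (if w \<in> ch G (\<tau> v) then \<Prod>a\<in>A \<inter> reach_from G w \<tau>. e a else 1)" for w
    by (cases "w \<in> ch G (\<tau> v)") (simp_all add: subtree_weight_def)
  show ?thesis
    unfolding weight prod.distrib subtree_weight_def[of _ _ v]
      prod_policy_desc_unfold[OF v] prod_reached_actions_unfold[OF v \<tau>]
    by (simp only: ac_simps)
qed

lemma subtree_gf_eq_one:
  assumes "is_policy \<pi>" and "\<forall>a\<in>A \<inter> desc w. e a = 1"
  shows "subtree_gf \<pi> e w = 1"
proof -
  have "subtree_gf \<pi> e w = (\<Sum>\<tau>\<in>PiE (N \<inter> desc w) (ch G). \<Prod>u\<in>N \<inter> desc w. \<pi> (\<tau> u))"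
    unfolding subtree_gf_def
  proof (rule sum.cong[OF refl])
    fix \<tau> assume "\<tau> \<in> PiE (N \<inter> desc w) (ch G)"
    then have "A \<inter> reach_from G w \<tau> \<subseteq> A \<inter> desc w" using reach_from_subset_desc by auto
    then have "(\<Prod>a\<in>A \<inter> reach_from G w \<tau>. e a) = 1" using assms(2) by (intro prod.neutral) blast
    then show "subtree_weight \<pi> e w \<tau> = (\<Prod>u\<in>N \<inter> desc w. \<pi> (\<tau> u))"
      unfolding subtree_weight_def by simp
  qed
  also have "\<dots> = 1" by (rule sum_policy_prod_eq_one[OF assms(1)]) blast
  finally show ?thesis .
qed

lemma subtree_gf_rec:
  assumes \<pi>: "is_policy \<pi>" and v: "v \<in> N"
  shows "subtree_gf \<pi> e v = (\<Sum>a\<in>ch G v. \<pi> a * e a * (\<Prod>w\<in>ch G a \<inter> N. subtree_gf \<pi> e w))"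
proof -
  define e' where "e' a w = (if w \<in> ch G a then e else (\<lambda>_. 1))" for a w
  define W where "W a \<tau> = (\<Prod>w\<in>next_infosets v. subtree_weight \<pi> (e' a w) w \<tau>)" for a \<tau>
  have "subtree_weight \<pi> e v \<tau> = (\<Sum>a\<in>ch G v. \<pi> a * e a * ((if \<tau> v = a then 1 else 0) * W a \<tau>))"
    if "\<tau> \<in> PiE (N \<inter> desc v) (ch G)" for \<tau>
  proof -
    have \<tau>: "\<forall>u\<in>N \<inter> desc v. \<tau> u \<in> ch G u" using that by auto
    then have "\<tau> v \<in> ch G v" using v self_in_desc by blast
    moreover have "(\<Sum>a\<in>ch G v. \<pi> a * e a * ((if \<tau> v = a then 1 else 0) * W a \<tau>))
        = (\<Sum>a\<in>ch G v. if \<tau> v = a then \<pi> a * e a * W a \<tau> else 0)"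
      by (rule sum.cong) auto
    ultimately show ?thesis
      unfolding subtree_weight_unfold[OF v \<tau>] W_def e'_def using finite_ch by (simp add: sum.delta)
  qed
  then have "subtree_gf \<pi> e v
      = (\<Sum>a\<in>ch G v. \<pi> a * e a * (\<Sum>\<tau>\<in>PiE (N \<inter> desc v) (ch G). (if \<tau> v = a then 1 else 0) * W a \<tau>))"
    unfolding subtree_gf_def by (simp add: sum.swap[of _ "ch G v"] sum_distrib_left cong: sum.cong)
  also have "\<dots> = (\<Sum>a\<in>ch G v. \<pi> a * e a * (\<Prod>w\<in>ch G a \<inter> N. subtree_gf \<pi> e w))"
  proof (rule sum.cong[OF refl])
    fix a assume a: "a \<in> ch G v"
    have "(\<Sum>\<tau>\<in>PiE (N \<inter> desc v) (ch G). (if \<tau> v = a then 1 else 0) * W a \<tau>)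
        = (\<Sum>b\<in>ch G v. if b = a then 1 else 0) * (\<Prod>w\<in>next_infosets v. subtree_gf \<pi> (e' a w) w)"
      unfolding W_def subtree_gf_def using subtree_weight_cong
      by (intro sum_PiE_infosets_desc_split[OF v]) blast
    also have "(\<Sum>b\<in>ch G v. if b = a then 1 else 0) = (1::real)"
      using a finite_ch by simp
    also have "(\<Prod>w\<in>next_infosets v. subtree_gf \<pi> (e' a w) w)
        = (\<Prod>w\<in>next_infosets v. if w \<in> ch G a then subtree_gf \<pi> e w else 1)"
      unfolding e'_def by (intro prod.cong refl) (simp add: subtree_gf_eq_one[OF \<pi>])
    also have "\<dots> = (\<Prod>w\<in>ch G a \<inter> N. subtree_gf \<pi> e w)"
    proof -
      have "{w \<in> next_infosets v. w \<in> ch G a} = ch G a \<inter> N" using a unfolding next_infosets_def by blast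
      then show ?thesis by (simp flip: prod.inter_filter[OF finite_next_infosets])
    qed
    finally show "\<pi> a * e a * (\<Sum>\<tau>\<in>PiE (N \<inter> desc v) (ch G). (if \<tau> v = a then 1 else 0) * W a \<tau>)
        = \<pi> a * e a * (\<Prod>w\<in>ch G a \<inter> N. subtree_gf \<pi> e w)" by simp
  qed
  finally show ?thesis .
qed

lemma subtree_gf_on_path:
  assumes \<pi>: "is_policy \<pi>" and \<sigma>: "is_strategy G \<sigma>" and v: "v \<in> N"
    and e: "\<forall>a\<in>A - reach_from G (root G) \<sigma>. e a = 1"
  shows "subtree_gf \<pi> e v = 1 - (1 - e (\<sigma> v) * (\<Prod>w\<in>ch G (\<sigma> v) \<inter> N. subtree_gf \<pi> e w)) * \<pi> (\<sigma> v)"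
proof -
  define b where "b = \<sigma> v"
  have b: "b \<in> ch G v" using \<sigma> v unfolding b_def is_strategy_def by blast
  have off_path: "\<pi> a * e a * (\<Prod>w\<in>ch G a \<inter> N. subtree_gf \<pi> e w) = \<pi> a" if a: "a \<in> ch G v - {b}" for a
  proof -
    have "A \<inter> desc a \<subseteq> A - reach_from G (root G) \<sigma>"
      using off_path_unreached[OF \<sigma> v] a unfolding b_def by blast
    then have "e a = 1" "\<forall>w\<in>ch G a \<inter> N. subtree_gf \<pi> e w = 1"
      using e a v ch_infoset self_in_desc desc_child_subset by (blast intro: subtree_gf_eq_one[OF \<pi>])+
    then show ?thesis by simp
  qed
  have "subtree_gf \<pi> e v = \<pi> b * e b * (\<Prod>w\<in>ch G b \<inter> N. subtree_gf \<pi> e w)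
      + (\<Sum>a\<in>ch G v - {b}. \<pi> a * e a * (\<Prod>w\<in>ch G a \<inter> N. subtree_gf \<pi> e w))"
    using subtree_gf_rec[OF \<pi> v] b finite_ch by (simp add: sum.remove)
  also have "(\<Sum>a\<in>ch G v - {b}. \<pi> a * e a * (\<Prod>w\<in>ch G a \<inter> N. subtree_gf \<pi> e w))
      = (\<Sum>a\<in>ch G v - {b}. \<pi> a)"
    using off_path by (rule sum.cong[OF refl])
  also have "(\<Sum>a\<in>ch G v - {b}. \<pi> a) = 1 - \<pi> b"
    using policy_sum[OF \<pi> v] b finite_ch by (simp add: sum_diff1)
  finally show ?thesis unfolding b_def by (simp add: algebra_simps)
qed

text \<open>\<open>Update\<^sub>t(v, x)\<close> is called with \<open>x = q\<^sub>t(p(v))\<close>, so that \<open>\<pi>\<^sub>t(b) x = q\<^sub>t(b)\<close> for the sampled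
  action \<open>b\<close> at \<open>v\<close>.\<close>

lemma psif_eq_subtree_gf:
  fixes \<pi> d :: "'v \<Rightarrow> real" and \<eta> \<gamma> :: real
  assumes \<pi>: "is_policy \<pi>" and \<sigma>: "is_strategy G \<sigma>"
  defines "e \<equiv> \<lambda>a. exp (- (if a \<in> reach_from G (root G) \<sigma>
                          then \<eta> * d a / (\<gamma> * beta G a + qprod G \<pi> a) else 0))"
  shows "v \<in> N \<Longrightarrow> v \<in> reach_from G (root G) \<sigma> \<Longrightarrow> card (desc v) \<le> k
    \<Longrightarrow> \<pi> (\<sigma> v) * x = qprod G \<pi> (\<sigma> v)
    \<Longrightarrow> psif G \<eta> \<gamma> \<pi> (reduce G \<sigma>) d k v x = subtree_gf \<pi> e v"
proof (induction k arbitrary: v x)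
  case 0
  then show ?case using finite_desc self_in_desc by (metis card_0_eq empty_iff le_0_eq)
next
  case (Suc k)
  define b where "b = \<sigma> v"
  have b: "b \<in> ch G v" using \<sigma> Suc.prems(1) unfolding b_def is_strategy_def by blast
  have bA: "b \<in> A" using b Suc.prems(1) ch_infoset by blast
  have bR: "b \<in> reach_from G (root G) \<sigma>"
    unfolding b_def using Suc.prems(1,2) by (rule reach_from_infoset[rotated])
  have "psif G \<eta> \<gamma> \<pi> (reduce G \<sigma>) d k w (\<pi> b * x) = subtree_gf \<pi> e w" if w: "w \<in> ch G b \<inter> N" for w
  proof (rule Suc.IH)
    show "w \<in> N" "w \<in> reach_from G (root G) \<sigma>"
      using w reach_from_action[OF bR bA] by blast+
    have "card (desc w) < card (desc b)" using w card_desc_child_less by blast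
    also have "\<dots> < card (desc v)" using b card_desc_child_less by blast
    finally show "card (desc w) \<le> k" using Suc.prems(3) by simp
    have "\<sigma> w \<in> ch G w" using \<sigma> w unfolding is_strategy_def by blast
    then have "qprod G \<pi> (\<sigma> w) = \<pi> (\<sigma> w) * qprod G \<pi> b"
      using w by (intro qprod_next[OF bA]) auto
    then show "\<pi> (\<sigma> w) * (\<pi> b * x) = qprod G \<pi> (\<sigma> w)"
      using Suc.prems(4) unfolding b_def by simp
  qed
  moreover have "e b = exp (- \<eta> * d b / (\<gamma> * beta G b + \<pi> b * x))"
    using bR Suc.prems(4) unfolding e_def b_def by simp
  moreover have "the (reduce G \<sigma> v) = b"
    unfolding b_def by (simp add: reduce_reached[OF Suc.prems(1,2)])
  moreover have "\<forall>a\<in>A - reach_from G (root G) \<sigma>. e a = 1" unfolding e_def by simp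
  ultimately show ?case
    using subtree_gf_on_path[OF \<pi> \<sigma> Suc.prems(1)] unfolding b_def by (simp add: Let_def)
qed

lemma rstrats_eq_reduce_image: "rstrats G = reduce G ` PiE N (ch G)"
proof (intro equalityI subsetI)
  fix \<rho> assume "\<rho> \<in> rstrats G"
  then obtain \<sigma> where \<sigma>: "is_strategy G \<sigma>" "\<rho> = reduce G \<sigma>" unfolding rstrats_def by blast
  have "reach_from G (root G) (restrict \<sigma> N) = reach_from G (root G) \<sigma>"
    by (rule reach_from_cong) simp
  then have "reduce G (restrict \<sigma> N) = reduce G \<sigma>"
    unfolding reduce_def by (auto simp: reach_from_def)
  moreover have "restrict \<sigma> N \<in> PiE N (ch G)" using \<sigma>(1) unfolding is_strategy_def by simp
  ultimately show "\<rho> \<in> reduce G ` PiE N (ch G)" using \<sigma>(2) by (metis image_eqI)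
next
  fix \<rho> assume "\<rho> \<in> reduce G ` PiE N (ch G)"
  then show "\<rho> \<in> rstrats G" unfolding rstrats_def is_strategy_def by auto
qed

lemma reduce_eq_iff:
  "reduce G \<tau> = reduce G \<tau>0 \<longleftrightarrow> (\<forall>u\<in>N \<inter> reach_from G (root G) \<tau>0. \<tau> u = \<tau>0 u)"
proof
  assume eq: "reduce G \<tau> = reduce G \<tau>0"
  show "\<forall>u\<in>N \<inter> reach_from G (root G) \<tau>0. \<tau> u = \<tau>0 u"
  proof
    fix u assume u: "u \<in> N \<inter> reach_from G (root G) \<tau>0"
    then have "reduce G \<tau> u = Some (\<tau>0 u)" using eq reduce_reached[of u G \<tau>0] by simp
    then show "\<tau> u = \<tau>0 u" unfolding reduce_def by (simp split: if_splits)
  qed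
next
  assume agree: "\<forall>u\<in>N \<inter> reach_from G (root G) \<tau>0. \<tau> u = \<tau>0 u"
  then have "reach_from G (root G) \<tau> = reach_from G (root G) \<tau>0" by (rule reach_from_cong)
  then show "reduce G \<tau> = reduce G \<tau>0"
    using agree unfolding reduce_def by (auto simp: reach_from_def)
qed

lemma bij_betw_reached_infosets_actions:
  assumes \<tau>: "is_strategy G \<tau>"
  shows "bij_betw \<tau> (N \<inter> reach_from G (root G) \<tau>) (A \<inter> reach_from G (root G) \<tau>)"
  unfolding bij_betw_def
proof
  show "inj_on \<tau> (N \<inter> reach_from G (root G) \<tau>)"
    using \<tau> parent_unique unfolding inj_on_def is_strategy_def by (metis IntD1)
  show "\<tau> ` (N \<inter> reach_from G (root G) \<tau>) = A \<inter> reach_from G (root G) \<tau>"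
  proof (intro equalityI subsetI)
    fix a assume "a \<in> \<tau> ` (N \<inter> reach_from G (root G) \<tau>)"
    then obtain u where u: "u \<in> N" "u \<in> reach_from G (root G) \<tau>" and a: "a = \<tau> u" by blast
    have "a \<in> A" using \<tau> u(1) ch_infoset unfolding a is_strategy_def by blast
    moreover have "a \<in> reach_from G (root G) \<tau>" unfolding a using u by (rule reach_from_infoset[rotated])
    ultimately show "a \<in> A \<inter> reach_from G (root G) \<tau>" by blast
  next
    fix a assume a: "a \<in> A \<inter> reach_from G (root G) \<tau>"
    then have "a \<in> reach_from G (root G) \<tau>" by blast
    then show "a \<in> \<tau> ` (N \<inter> reach_from G (root G) \<tau>)"
    proof (cases rule: reach_from_cases)
      case self
      then show ?thesis using a root_infoset infosets_actions_disjoint by blast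
    next
      case (infoset u)
      then show ?thesis by blast
    next
      case (action p)
      then show ?thesis using a ch_action infosets_actions_disjoint infosets_Un_actions by blast
    qed
  qed
qed

lemma sum_reduce_fiber:
  assumes \<pi>: "is_policy \<pi>" and \<tau>0: "\<tau>0 \<in> PiE N (ch G)"
  shows "(\<Sum>\<tau>\<in>{\<tau>\<in>PiE N (ch G). reduce G \<tau> = reduce G \<tau>0}.
            (\<Prod>u\<in>N. \<pi> (\<tau> u)) * (\<Prod>a\<in>A \<inter> reach_from G (root G) \<tau>. e a))
       = (\<Prod>a\<in>A \<inter> reach_from G (root G) \<tau>0. \<pi> a) * (\<Prod>a\<in>A \<inter> reach_from G (root G) \<tau>0. e a)"
proof -
  define R where "R = reach_from G (root G) \<tau>0"
  define C where "C = (\<Prod>a\<in>A \<inter> R. \<pi> a) * (\<Prod>a\<in>A \<inter> R. e a)"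
  have \<tau>0_strategy: "is_strategy G \<tau>0" using \<tau>0 unfolding is_strategy_def by auto
  have fiber: "{\<tau>\<in>PiE N (ch G). reduce G \<tau> = reduce G \<tau>0} = {\<tau>\<in>PiE N (ch G). \<forall>u\<in>N \<inter> R. \<tau> u = \<tau>0 u}"
    unfolding reduce_eq_iff R_def ..
  have summand: "(\<Prod>u\<in>N. \<pi> (\<tau> u)) * (\<Prod>a\<in>A \<inter> reach_from G (root G) \<tau>. e a)
      = C * (\<Prod>u\<in>N - N \<inter> R. \<pi> (\<tau> u))" if agree: "\<forall>u\<in>N \<inter> R. \<tau> u = \<tau>0 u" for \<tau>
  proof -
    have "reach_from G (root G) \<tau> = R" using agree unfolding R_def by (rule reach_from_cong)
    moreover have "(\<Prod>u\<in>N. \<pi> (\<tau> u)) = (\<Prod>u\<in>N \<inter> R. \<pi> (\<tau> u)) * (\<Prod>u\<in>N - N \<inter> R. \<pi> (\<tau> u))"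
      using prod.subset_diff[of "N \<inter> R" N] finite_infosets by (simp add: mult.commute)
    moreover have "(\<Prod>u\<in>N \<inter> R. \<pi> (\<tau> u)) = (\<Prod>u\<in>N \<inter> R. \<pi> (\<tau>0 u))"
      using agree by simp
    moreover have "(\<Prod>u\<in>N \<inter> R. \<pi> (\<tau>0 u)) = (\<Prod>a\<in>A \<inter> R. \<pi> a)"
      using prod.reindex_bij_betw[OF bij_betw_reached_infosets_actions[OF \<tau>0_strategy]] unfolding R_def by simp
    ultimately show ?thesis unfolding C_def by (simp add: ac_simps)
  qed
  have "(\<Sum>\<tau>\<in>{\<tau>\<in>PiE N (ch G). \<forall>u\<in>N \<inter> R. \<tau> u = \<tau>0 u}.
          (\<Prod>u\<in>N. \<pi> (\<tau> u)) * (\<Prod>a\<in>A \<inter> reach_from G (root G) \<tau>. e a))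
      = C * (\<Sum>\<tau>\<in>{\<tau>\<in>PiE N (ch G). \<forall>u\<in>N \<inter> R. \<tau> u = \<tau>0 u}. \<Prod>u\<in>N - N \<inter> R. \<pi> (\<tau> u))"
    unfolding sum_distrib_left by (rule sum.cong) (simp_all add: summand)
  also have "(\<Sum>\<tau>\<in>{\<tau>\<in>PiE N (ch G). \<forall>u\<in>N \<inter> R. \<tau> u = \<tau>0 u}. \<Prod>u\<in>N - N \<inter> R. \<pi> (\<tau> u)) = 1"
    using \<tau>0 finite_infosets finite_ch policy_sum[OF \<pi>] by (intro sum_PiE_extensions_prod) auto
  finally show ?thesis unfolding fiber C_def R_def by simp
qed

lemma sum_rstrats_eq_subtree_gf:
  fixes \<pi> \<theta> :: "'v \<Rightarrow> real"
  assumes \<pi>: "is_policy \<pi>"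
  shows "(\<Sum>\<rho>\<in>rstrats G. (\<Prod>a\<in>Aof G \<rho>. \<pi> a) * exp (- (\<Sum>a\<in>Aof G \<rho>. \<theta> a)))
       = subtree_gf \<pi> (\<lambda>a. exp (- \<theta> a)) (root G)"
proof -
  define P where "P = PiE N (ch G)"
  define \<Phi> where "\<Phi> \<tau> = (\<Prod>u\<in>N. \<pi> (\<tau> u)) * (\<Prod>a\<in>A \<inter> reach_from G (root G) \<tau>. exp (- \<theta> a))" for \<tau>
  have finite_P: "finite P" unfolding P_def using finite_infosets finite_ch by (simp add: finite_PiE)
  have "N \<inter> desc (root G) = N" using desc_root infosets_Un_actions by blast
  then have "subtree_gf \<pi> (\<lambda>a. exp (- \<theta> a)) (root G) = (\<Sum>\<tau>\<in>P. \<Phi> \<tau>)"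
    unfolding subtree_gf_def subtree_weight_def P_def \<Phi>_def by simp
  also have "\<dots> = (\<Sum>\<rho>\<in>reduce G ` P. \<Sum>\<tau>\<in>{\<tau>\<in>P. reduce G \<tau> = \<rho>}. \<Phi> \<tau>)"
    using finite_P by (simp add: sum.group)
  also have "\<dots> = (\<Sum>\<rho>\<in>reduce G ` P. (\<Prod>a\<in>Aof G \<rho>. \<pi> a) * exp (- (\<Sum>a\<in>Aof G \<rho>. \<theta> a)))"
  proof (rule sum.cong[OF refl])
    fix \<rho> assume "\<rho> \<in> reduce G ` P"
    then obtain \<tau>0 where \<tau>0: "\<tau>0 \<in> P" "\<rho> = reduce G \<tau>0" by blast
    have "Aof G \<rho> = A \<inter> reach_from G (root G) \<tau>0"
      unfolding Aof_def \<tau>0(2) reach_reduce ..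
    moreover have "finite (A \<inter> reach_from G (root G) \<tau>0)" using finite_actions by blast
    ultimately show "(\<Sum>\<tau>\<in>{\<tau>\<in>P. reduce G \<tau> = \<rho>}. \<Phi> \<tau>) = (\<Prod>a\<in>Aof G \<rho>. \<pi> a) * exp (- (\<Sum>a\<in>Aof G \<rho>. \<theta> a))"
      using sum_reduce_fiber[OF \<pi> \<tau>0(1)[unfolded P_def]] unfolding \<Phi>_def P_def \<tau>0(2)
      by (simp add: exp_sum sum_negf[symmetric])
  qed
  finally show ?thesis unfolding rstrats_eq_reduce_image P_def ..
qed

end

theorem mainTheorem10:
  fixes G :: "'v game" and T :: nat and \<epsilon> :: real
    and sig :: "nat \<Rightarrow> 'v \<Rightarrow> 'v option" and d :: "nat \<Rightarrow> 'v \<Rightarrow> real" and t :: nat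
  assumes "game_tree G"
    and "0 < \<epsilon>" and "\<epsilon> < 1"
    and "\<And>s. s \<in> {1..T} \<Longrightarrow> sig s \<in> rstrats G"
    and "t \<in> {1..T}"
  shows "let \<eta> = eta G T \<epsilon>; \<gamma> = gam G T \<epsilon>; \<pi> = pol G T \<epsilon> sig d (t - 1);
             \<theta> = (\<lambda>a. if a \<in> reach G (sig t)
                        then \<eta> * d t a / (\<gamma> * beta G a + qprod G \<pi> a) else 0)
         in psi G \<eta> \<gamma> \<pi> (sig t) (d t) (root G) 1
            = (\<Sum>\<rho> \<in> rstrats G. (\<Prod>a \<in> Aof G \<rho>. \<pi> a) * exp (- (\<Sum>a \<in> Aof G \<rho>. \<theta> a)))"
proof -
  interpret tree_game G by unfold_locales (rule assms(1))
  define \<eta> \<gamma> \<pi> where "\<eta> = eta G T \<epsilon>" and "\<gamma> = gam G T \<epsilon>" and "\<pi> = pol G T \<epsilon> sig d (t - 1)"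
  define \<theta> where "\<theta> = (\<lambda>a. if a \<in> reach G (sig t) then \<eta> * d t a / (\<gamma> * beta G a + qprod G \<pi> a) else 0)"
  have \<pi>: "is_policy \<pi>" unfolding \<pi>_def using assms(4,5) by (intro policy_pol) auto
  obtain \<sigma> where \<sigma>: "is_strategy G \<sigma>" and sig_t: "sig t = reduce G \<sigma>"
    using assms(4,5) unfolding rstrats_def by blast
  have root_move: "\<sigma> (root G) \<in> ch G (root G)" using \<sigma> root_infoset unfolding is_strategy_def by blast
  have "psi G \<eta> \<gamma> \<pi> (sig t) (d t) (root G) 1 = subtree_gf \<pi> (\<lambda>a. exp (- \<theta> a)) (root G)"
    unfolding psi_def sig_t \<theta>_def reach_reduce
    using psif_eq_subtree_gf[OF \<pi> \<sigma> root_infoset reach_from_self] desc_root qprod_root_child[OF root_move]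
    by simp
  also have "\<dots> = (\<Sum>\<rho> \<in> rstrats G. (\<Prod>a \<in> Aof G \<rho>. \<pi> a) * exp (- (\<Sum>a \<in> Aof G \<rho>. \<theta> a)))"
    by (rule sum_rstrats_eq_subtree_gf[OF \<pi>, symmetric])
  finally show ?thesis unfolding Let_def \<eta>_def \<gamma>_def \<pi>_def \<theta>_def .
qed

end
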